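(* Let $X,Y$ be realcompact completely regular spaces, $E,F$ normed spaces with $E$ finite-dimensional, and let $T:C(X,E)\to C(Y,F)$ be a linear biseparating map. If $C(X,E)$ and $C(Y,F)$ are endowed with the compact-open topology, then $T$ and $T^{-1}$ are continuous.
   Context: $\mathbb K=\mathbb R$ or $\mathbb C$; $E,F$ are $\mathbb K$-normed spaces; $C(Z,G)$ denotes the continuous $G$-valued functions on $Z$. The cozero set of $f$ is $c(f)=\{x: f(x)\neq0\}$. A map $T$ is separating if it is additive and $c(Tf)\cap c(Tg)=\emptyset$ whenever $c(f)\cap c(g)=\emptyset$; biseparating if it is bijective and both $T$ and $T^{-1}$ are separating. *)

theory Defs
  imports "HOL-Analysis.Analysis"
begin

text \<open>The index set is taken inside the type of real-valued
 functions on the points of the space (enough, since C(X) suffices as index set).\<close>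
definition realcompact_space :: "'a topology \<Rightarrow> bool" where
  "realcompact_space X \<longleftrightarrow>
     (\<exists>(I :: ('a \<Rightarrow> real) set) S.
        closedin (product_topology (\<lambda>_. euclideanreal) I) S \<and>
        X homeomorphic_space subtopology (product_topology (\<lambda>_. euclideanreal) I) S)"

definition cfun :: "'a topology \<Rightarrow> ('a \<Rightarrow> 'e::real_normed_vector) set" where
  "cfun X = {f. continuous_map X euclidean f \<and> (\<forall>x. x \<notin> topspace X \<longrightarrow> f x = 0)}"

definition cozero :: "'a topology \<Rightarrow> ('a \<Rightarrow> 'e::zero) \<Rightarrow> 'a set" where
  "cozero X f = {x \<in> topspace X. f x \<noteq> 0}"

definition separating ::
  "'a topology \<Rightarrow> 'b topology \<Rightarrow> (('a \<Rightarrow> 'e::real_normed_vector) \<Rightarrow> ('b \<Rightarrow> 'f::real_normed_vector)) \<Rightarrow> bool" where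
  "separating X Y T \<longleftrightarrow>
     (\<forall>f\<in>cfun X. \<forall>g\<in>cfun X. T (\<lambda>x. f x + g x) = (\<lambda>y. T f y + T g y)) \<and>
     (\<forall>f\<in>cfun X. \<forall>g\<in>cfun X. cozero X f \<inter> cozero X g = {} \<longrightarrow>
        cozero Y (T f) \<inter> cozero Y (T g) = {})"

definition biseparating ::
  "'a topology \<Rightarrow> 'b topology \<Rightarrow> (('a \<Rightarrow> 'e::real_normed_vector) \<Rightarrow> ('b \<Rightarrow> 'f::real_normed_vector)) \<Rightarrow> bool" where
  "biseparating X Y T \<longleftrightarrow>
     bij_betw T (cfun X) (cfun Y) \<and> separating X Y T \<and>
     separating Y X (inv_into (cfun X) T)"

definition linear_on_cfun ::
  "'a topology \<Rightarrow> (('a \<Rightarrow> 'e::real_normed_vector) \<Rightarrow> ('b \<Rightarrow> 'f::real_normed_vector)) \<Rightarrow> bool" where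
  "linear_on_cfun X T \<longleftrightarrow>
     (\<forall>f\<in>cfun X. \<forall>g\<in>cfun X. T (\<lambda>x. f x + g x) = (\<lambda>y. T f y + T g y)) \<and>
     (\<forall>c. \<forall>f\<in>cfun X. T (\<lambda>x. c *\<^sub>R f x) = (\<lambda>y. c *\<^sub>R T f y))"

definition compact_open_topology ::
  "'a topology \<Rightarrow> ('a \<Rightarrow> 'e::real_normed_vector) topology" where
  "compact_open_topology X = topology_generated_by
     {{f \<in> cfun X. f ` K \<subseteq> U} | K U. compactin X K \<and> open U}"

end

theory Submission
  imports Defs
begin

text \<open>
  Call \<open>x0\<close> a support point of \<open>y\<close> if every neighbourhood of \<open>x0\<close> carries some \<open>f\<close> with
  \<open>T f y \<noteq> 0\<close>. The heart of the proof is that \<open>T f y = 0\<close> whenever \<open>f\<close> vanishes at a support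
  point. Otherwise let \<open>u = 1 / sqrt (norm f)\<close> and cut \<open>f\<close> into the blocks where \<open>u\<close> is close
  to an even integer \<open>k\<close>. As \<open>u\<close> only grows like \<open>norm f\<close> to the power \<open>-1/2\<close>, the sum of the
  blocks weighted by \<open>k\<close> is still continuous; but since \<open>T\<close> preserves disjointness of supports,
  its \<open>T\<close>-image is \<open>k\<close> times that of the \<open>k\<close>-th block wherever that block is seen, and complete
  regularity of \<open>Y\<close> forces this to happen arbitrarily close to \<open>y\<close> for arbitrarily large \<open>k\<close>,
  contradicting continuity of the image at \<open>y\<close>.

  The same cutting argument, applied to any real function \<open>u\<close> on \<open>X\<close>, shows that some value of
  \<open>u\<close> carries \<open>T\<close>-mass at \<open>y\<close>. For the coordinates of a closed embedding of the realcompact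
  space \<open>X\<close> into a power of the real line these values are the coordinates of a support point
  \<open>supp y\<close>. Hence \<open>T f y = J y (f (supp y))\<close> with \<open>J y\<close> linear and \<open>supp\<close> continuous, so on a
  compact \<open>L\<close> the norm of \<open>T f\<close> is bounded by a constant (finite dimension of \<open>E\<close>) times the
  norm of \<open>f\<close> on the compact set \<open>supp ` L\<close>: \<open>T\<close> is continuous for the compact-open topologies.
  The inverse is again linear and biseparating, and \<open>F\<close>, the image of some \<open>J y\<close>, is
  finite-dimensional, so the same argument applies to it.
\<close>

lemma continuous_map_real_scaleR:
  fixes g :: "'a \<Rightarrow> 'e::real_normed_vector"
  shows "continuous_map X euclideanreal f \<Longrightarrow> continuous_map X euclidean g \<Longrightarrow>
    continuous_map X euclidean (\<lambda>x. f x *\<^sub>R g x)"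
  by (simp add: continuous_map_atin tendsto_scaleR)

lemma compactin_powertop_real_sup_sphere:
  assumes "finite B"
  shows "compactin (powertop_real B) {a \<in> PiE B (\<lambda>_. {-1..1}). \<exists>b\<in>B. \<bar>a b\<bar> = 1}"
proof -
  let ?cube = "PiE B (\<lambda>_. {-1..1::real})"
  have "?cube \<subseteq> topspace (powertop_real B)"
    unfolding topspace_product_topology by (rule PiE_mono) auto
  have "compactin (powertop_real B) {a \<in> ?cube. \<bar>a b\<bar> = 1}" if "b \<in> B" for b
  proof -
    have "continuous_map (powertop_real B) euclideanreal (\<lambda>a. a b)"
      using continuous_map_product_projection[OF that, of "\<lambda>_. euclideanreal"] by simp
    then have "closedin (powertop_real B) {a \<in> topspace (powertop_real B). \<bar>a b\<bar> \<in> {1}}"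
      by (intro closedin_continuous_map_preimage[where Y = euclideanreal] continuous_map_real_abs) auto
    moreover have "compactin (powertop_real B) ?cube" by (simp add: compactin_PiE)
    ultimately have "compactin (powertop_real B) ({a \<in> topspace (powertop_real B). \<bar>a b\<bar> \<in> {1}} \<inter> ?cube)"
      by (intro closed_Int_compactin)
    moreover have "{a \<in> topspace (powertop_real B). \<bar>a b\<bar> \<in> {1}} \<inter> ?cube = {a \<in> ?cube. \<bar>a b\<bar> = 1}"
      using \<open>?cube \<subseteq> topspace (powertop_real B)\<close> by auto
    ultimately show ?thesis by simp
  qed
  then have "compactin (powertop_real B) (\<Union>b\<in>B. {a \<in> ?cube. \<bar>a b\<bar> = 1})"
    using assms by (intro compactin_Union) auto
  moreover have "(\<Union>b\<in>B. {a \<in> ?cube. \<bar>a b\<bar> = 1}) = {a \<in> ?cube. \<exists>b\<in>B. \<bar>a b\<bar> = 1}" by auto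
  ultimately show ?thesis by simp
qed

lemma independent_sum_norm_bounded_below:
  fixes B :: "'e::real_normed_vector set"
  assumes fin: "finite B" and ind: "independent B"
  shows "\<exists>m>0. \<forall>a. (\<forall>c\<in>B. \<bar>a c\<bar> \<le> 1) \<and> (\<exists>b\<in>B. \<bar>a b\<bar> = 1) \<longrightarrow>
           m \<le> norm (\<Sum>c\<in>B. a c *\<^sub>R c)"
proof (cases "B = {}")
  case True
  then show ?thesis by (intro exI[of _ 1]) auto
next
  case False
  define Q where "Q = {a \<in> PiE B (\<lambda>_. {-1..1::real}). \<exists>b\<in>B. \<bar>a b\<bar> = 1}"
  define g where "g = (\<lambda>a::'e\<Rightarrow>real. norm (\<Sum>c\<in>B. a c *\<^sub>R c))"
  have "continuous_map (powertop_real B) euclideanreal g"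
    unfolding g_def using continuous_map_product_projection[of _ B "\<lambda>_. euclideanreal"]
    by (intro continuous_map_norm continuous_map_sum fin continuous_map_real_scaleR) auto
  then have "compact (g ` Q)"
    using image_compactin[OF compactin_powertop_real_sup_sphere[OF fin]] unfolding Q_def by fastforce
  moreover obtain b0 where b0: "b0 \<in> B" using False by auto
  then have "(\<lambda>c\<in>B. if c = b0 then 1 else 0) \<in> Q" unfolding Q_def by force
  ultimately obtain a0 where a0: "a0 \<in> Q" "\<And>a. a \<in> Q \<Longrightarrow> g a0 \<le> g a"
    using compact_attains_inf[of "g ` Q"] by blast
  have "g a0 > 0"
  proof (rule ccontr)
    assume "\<not> g a0 > 0"
    then have "(\<Sum>c\<in>B. a0 c *\<^sub>R c) = 0" unfolding g_def by simp
    then have "\<forall>c\<in>B. a0 c = 0"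
      using ind fin independent_explicit_finite_subsets by (metis dual_order.refl)
    then show False using a0(1) unfolding Q_def by auto
  qed
  moreover have "g a0 \<le> g a" if "\<forall>c\<in>B. \<bar>a c\<bar> \<le> 1" "\<exists>b\<in>B. \<bar>a b\<bar> = 1" for a
  proof -
    have "restrict a B \<in> Q" using that unfolding Q_def by (auto simp: abs_le_iff)
    moreover have "g (restrict a B) = g a" unfolding g_def by (intro arg_cong[of _ _ norm] sum.cong) auto
    ultimately show ?thesis using a0(2) by metis
  qed
  ultimately show ?thesis unfolding g_def by blast
qed

lemma independent_coefficients_bounded:
  fixes B :: "'e::real_normed_vector set"
  assumes fin: "finite B" and ind: "independent B"
  shows "\<exists>M. \<forall>a. \<forall>b\<in>B. \<bar>a b\<bar> \<le> M * norm (\<Sum>c\<in>B. a c *\<^sub>R c)"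
proof -
  obtain m where m: "m > 0" "\<And>a. (\<forall>c\<in>B. \<bar>a c\<bar> \<le> 1) \<Longrightarrow> (\<exists>b\<in>B. \<bar>a b\<bar> = 1) \<Longrightarrow>
      m \<le> norm (\<Sum>c\<in>B. a c *\<^sub>R c)"
    using independent_sum_norm_bounded_below[OF fin ind] by blast
  have "\<bar>a b\<bar> \<le> (1 / m) * norm (\<Sum>c\<in>B. a c *\<^sub>R c)" if b: "b \<in> B" for a b
  proof -
    define s where "s = Max ((\<lambda>c. \<bar>a c\<bar>) ` B)"
    have sb: "\<bar>a c\<bar> \<le> s" if "c \<in> B" for c unfolding s_def using fin that by auto
    obtain c1 where c1: "c1 \<in> B" "s = \<bar>a c1\<bar>"
      unfolding s_def using fin b by (metis (no_types, lifting) Max_in empty_iff finite_imageI image_iff image_is_empty)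
    show ?thesis
    proof (cases "s = 0")
      case True
      then show ?thesis using sb[OF b] m(1) by auto
    next
      case False
      then have spos: "s > 0" using sb[OF b] by linarith
      have "m \<le> norm (\<Sum>c\<in>B. (a c / s) *\<^sub>R c)"
        using sb spos c1 by (intro m(2)) (auto simp: abs_divide)
      also have "\<dots> = norm ((1 / s) *\<^sub>R (\<Sum>c\<in>B. a c *\<^sub>R c))"
        by (simp add: scaleR_sum_right)
      also have "\<dots> = norm (\<Sum>c\<in>B. a c *\<^sub>R c) / s"
        using spos by simp
      finally have "s \<le> (1 / m) * norm (\<Sum>c\<in>B. a c *\<^sub>R c)" using spos m(1) by (simp add: field_simps)
      then show ?thesis using sb[OF b] by linarith
    qed
  qed
  then show ?thesis by blast
qed

lemma finite_dimensional_coefficients_bounded: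
  assumes "\<exists>B::'e::real_normed_vector set. finite B \<and> span B = UNIV"
  shows "\<exists>B::'e set. finite B \<and> (\<exists>M. \<forall>v. (\<Sum>b\<in>B. representation B v b *\<^sub>R b) = v \<and>
            (\<forall>b\<in>B. \<bar>representation B v b\<bar> \<le> M * norm v))"
proof -
  obtain B0 :: "'e set" where B0: "finite B0" "span B0 = UNIV" using assms by blast
  obtain B where B: "B \<subseteq> B0" "independent B" "B0 \<subseteq> span B"
    using maximal_independent_subset[of B0] by blast
  have finB: "finite B" using B(1) B0(1) finite_subset by blast
  have spB: "v \<in> span B" for v
    using B(3) B0(2) span_minimal[of B0 "span B"] by auto
  obtain M where M: "\<forall>a. \<forall>b\<in>B. \<bar>a b\<bar> \<le> M * norm (\<Sum>c\<in>B. a c *\<^sub>R c)"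
    using independent_coefficients_bounded[OF finB B(2)] by blast
  have rep: "(\<Sum>b\<in>B. representation B v b *\<^sub>R b) = v" for v
    by (rule real_vector.sum_representation_eq[OF B(2) spB finB order_refl])
  show ?thesis
  proof (intro exI conjI allI ballI)
    fix v b assume "b \<in> B"
    then show "\<bar>representation B v b\<bar> \<le> M * norm v"
      using M rep[of v] by metis
  qed (use finB rep in auto)
qed

lemma atin_le_atin_within_openin:
  assumes "openin X U" "x \<in> U"
  shows "atin X x \<le> atin_within X x U"
  unfolding le_filter_def
proof (intro allI impI)
  fix P assume "eventually P (atin_within X x U)"
  then have "x \<notin> topspace X \<or> (\<exists>T. openin X T \<and> x \<in> T \<and> (\<forall>z\<in>T. z \<in> U \<and> z \<noteq> x \<longrightarrow> P z))"
    unfolding eventually_atin_within .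
  then show "eventually P (atin X x)" unfolding eventually_atin
  proof (elim disjE)
    assume "x \<notin> topspace X"
    then show "x \<notin> topspace X \<or> (\<exists>V. openin X V \<and> x \<in> V \<and> (\<forall>z\<in>V - {x}. P z))" by simp
  next
    assume "\<exists>T. openin X T \<and> x \<in> T \<and> (\<forall>z\<in>T. z \<in> U \<and> z \<noteq> x \<longrightarrow> P z)"
    then obtain T where T: "openin X T" "x \<in> T" "\<forall>z\<in>T. z \<in> U \<and> z \<noteq> x \<longrightarrow> P z" by blast
    have "openin X (T \<inter> U)" using T(1) assms(1) by auto
    moreover have "x \<in> T \<inter> U" using T(2) assms(2) by auto
    moreover have "\<forall>z\<in>(T \<inter> U) - {x}. P z" using T(3) by auto
    ultimately show "x \<notin> topspace X \<or> (\<exists>V. openin X V \<and> x \<in> V \<and> (\<forall>z\<in>V - {x}. P z))" by blast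
  qed
qed

lemma continuous_map_dominated_off_zeros:
  fixes f :: "'a \<Rightarrow> 'e::real_normed_vector" and g :: "'a \<Rightarrow> 'g::real_normed_vector"
  assumes f: "continuous_map X euclidean f"
    and g_cozero: "continuous_map (subtopology X {x \<in> topspace X. f x \<noteq> 0}) euclidean g"
    and \<rho>: "continuous_on UNIV \<rho>" "\<rho> 0 = 0"
    and dominated: "\<And>x. x \<in> topspace X \<Longrightarrow> norm (g x) \<le> \<rho> (norm (f x))"
  shows "continuous_map X euclidean g"
  unfolding continuous_map_atin limitin_canonical_iff
proof
  let ?U = "{x \<in> topspace X. f x \<noteq> 0}"
  fix x assume x: "x \<in> topspace X"
  show "(g \<longlongrightarrow> g x) (atin X x)"
  proof (cases "f x = 0")
    case False
    have "openin X {x \<in> topspace X. f x \<in> -{0}}"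
      by (rule openin_continuous_map_preimage[OF f]) auto
    then have U: "openin X ?U" by simp
    have "limitin euclidean g (g x) (atin_within X x ?U)"
      using limit_continuous_map_within[OF g_cozero] x False by simp
    moreover have "x \<in> ?U" using x False by simp
    ultimately show ?thesis
      using tendsto_mono[OF atin_le_atin_within_openin[OF U]] by simp
  next
    case True
    have "(f \<longlongrightarrow> 0) (atin X x)"
      using limitin_continuous_map[OF f x refl] True by simp
    then have "((\<lambda>z. norm (f z)) \<longlongrightarrow> 0) (atin X x)"
      using tendsto_norm_zero by blast
    then have lim: "((\<lambda>z. \<rho> (norm (f z))) \<longlongrightarrow> 0) (atin X x)"
      using \<rho> continuous_on_tendsto_compose[of UNIV \<rho>] by fastforce
    have "eventually (\<lambda>z. norm (g z) \<le> \<rho> (norm (f z))) (atin X x)"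
      using x dominated unfolding eventually_atin by auto
    then have "(g \<longlongrightarrow> 0) (atin X x)" by (rule Lim_null_comparison[OF _ lim])
    moreover have "g x = 0" using dominated[OF x] True \<rho>(2) by simp
    ultimately show ?thesis by simp
  qed
qed

lemma cfunD:
  "f \<in> cfun X \<Longrightarrow> continuous_map X euclidean f"
  "f \<in> cfun X \<Longrightarrow> x \<notin> topspace X \<Longrightarrow> f x = 0"
  by (auto simp: cfun_def)

lemma cfun_nonzero_in_topspace: "f \<in> cfun X \<Longrightarrow> f x \<noteq> 0 \<Longrightarrow> x \<in> topspace X"
  by (auto simp: cfun_def)

lemma cfun_add: "f \<in> cfun X \<Longrightarrow> g \<in> cfun X \<Longrightarrow> (\<lambda>x. f x + g x) \<in> cfun X"
  by (auto simp: cfun_def intro: continuous_map_add)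

lemma cfun_diff: "f \<in> cfun X \<Longrightarrow> g \<in> cfun X \<Longrightarrow> (\<lambda>x. f x - g x) \<in> cfun X"
  by (auto simp: cfun_def intro: continuous_map_diff)

lemma cfun_real_scaleR:
  "continuous_map X euclideanreal a \<Longrightarrow> f \<in> cfun X \<Longrightarrow> (\<lambda>x. a x *\<^sub>R f x) \<in> cfun X"
  by (auto simp: cfun_def intro: continuous_map_real_scaleR)

lemma cfun_scaleR: "f \<in> cfun X \<Longrightarrow> (\<lambda>x. c *\<^sub>R f x) \<in> cfun X"
  using cfun_real_scaleR[of X "\<lambda>_. c" f] by simp

lemma cfun_zero: "(\<lambda>x. 0) \<in> cfun X"
  by (auto simp: cfun_def)

lemma cfun_empty_space: "topspace X = {} \<Longrightarrow> cfun X = {\<lambda>x. 0}"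
  by (auto simp: cfun_def)

definition const_fun :: "'a topology \<Rightarrow> 'e::real_normed_vector \<Rightarrow> 'a \<Rightarrow> 'e" where
  "const_fun X v = (\<lambda>x. if x \<in> topspace X then v else 0)"

lemma cfun_const_fun: "const_fun X v \<in> cfun X"
proof -
  have "continuous_map X euclidean (const_fun X v)"
    by (rule continuous_map_eq[of _ _ "\<lambda>x. v"]) (auto simp: const_fun_def)
  then show ?thesis by (auto simp: cfun_def const_fun_def)
qed

lemma separating_disjoint_supports:
  assumes "separating X Y T" "f \<in> cfun X" "g \<in> cfun X" "\<And>x. f x \<noteq> 0 \<Longrightarrow> g x = 0"
    "T f \<in> cfun Y" "T g \<in> cfun Y"
  shows "T f y = 0 \<or> T g y = 0"
proof -
  have "cozero X f \<inter> cozero X g = {}" using assms(4) by (auto simp: cozero_def)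
  then have "cozero Y (T f) \<inter> cozero Y (T g) = {}"
    using assms(1-3) by (auto simp: separating_def)
  then show ?thesis using assms(5,6) by (auto simp: cozero_def cfun_def)
qed

lemma separating_cong:
  assumes "separating X Y T" "\<And>f. f \<in> cfun X \<Longrightarrow> T' f = T f"
  shows "separating X Y T'"
proof -
  have "T' (\<lambda>x. f x + g x) = (\<lambda>y. T' f y + T' g y)" if f: "f \<in> cfun X" and g: "g \<in> cfun X" for f g
  proof -
    have "T' (\<lambda>x. f x + g x) = T (\<lambda>x. f x + g x)" using assms(2) cfun_add f g by blast
    also have "\<dots> = (\<lambda>y. T f y + T g y)" using assms(1) f g unfolding separating_def by blast
    also have "\<dots> = (\<lambda>y. T' f y + T' g y)" using assms(2) f g by simp
    finally show ?thesis .
  qed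
  moreover have "cozero Y (T' f) \<inter> cozero Y (T' g) = {}"
    if f: "f \<in> cfun X" and g: "g \<in> cfun X" and d: "cozero X f \<inter> cozero X g = {}" for f g
  proof -
    have "cozero Y (T f) \<inter> cozero Y (T g) = {}" using assms(1) f g d unfolding separating_def by blast
    then show ?thesis using assms(2)[OF f] assms(2)[OF g] by simp
  qed
  ultimately show ?thesis unfolding separating_def by blast
qed

lemma biseparating_inv_into:
  assumes "biseparating X Y T"
  shows "biseparating Y X (inv_into (cfun X) T)"
proof -
  have bij: "bij_betw T (cfun X) (cfun Y)" using assms by (simp add: biseparating_def)
  have "separating X Y T" using assms by (simp add: biseparating_def)
  then have "separating X Y (inv_into (cfun Y) (inv_into (cfun X) T))"
    by (rule separating_cong) (rule inv_into_inv_into_eq[OF bij])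
  then show ?thesis
    using assms bij_betw_inv_into[OF bij] by (simp add: biseparating_def)
qed

lemma linear_on_cfun_inv_into:
  assumes lin: "linear_on_cfun X T" and bij: "bij_betw T (cfun X) (cfun Y)"
  shows "linear_on_cfun Y (inv_into (cfun X) T)"
proof -
  let ?S = "inv_into (cfun X) T"
  have S: "?S g \<in> cfun X" "T (?S g) = g" if "g \<in> cfun Y" for g
    using that bij inv_into_into[of g T "cfun X"] f_inv_into_f[of g T "cfun X"]
    by (simp_all add: bij_betw_def)
  have ST: "?S (T f) = f" if "f \<in> cfun X" for f
    using that bij by (meson bij_betw_inv_into_left)
  have "?S (\<lambda>y. g1 y + g2 y) = (\<lambda>x. ?S g1 x + ?S g2 x)" if g: "g1 \<in> cfun Y" "g2 \<in> cfun Y" for g1 g2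
  proof -
    have "T (\<lambda>x. ?S g1 x + ?S g2 x) = (\<lambda>y. g1 y + g2 y)"
      using lin S[OF g(1)] S[OF g(2)] unfolding linear_on_cfun_def by simp
    then show ?thesis using ST[OF cfun_add[OF S(1)[OF g(1)] S(1)[OF g(2)]]] by simp
  qed
  moreover have "?S (\<lambda>y. c *\<^sub>R g y) = (\<lambda>x. c *\<^sub>R ?S g x)" if g: "g \<in> cfun Y" for c g
  proof -
    have "T (\<lambda>x. c *\<^sub>R ?S g x) = (\<lambda>y. c *\<^sub>R g y)"
      using lin S[OF g] unfolding linear_on_cfun_def by simp
    then show ?thesis using ST[OF cfun_scaleR[OF S(1)[OF g]], of c] by simp
  qed
  ultimately show ?thesis unfolding linear_on_cfun_def by blast
qed

lemma topspace_compact_open_topology: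
  "topspace (compact_open_topology X) = (cfun X :: ('a \<Rightarrow> 'e::real_normed_vector) set)"
proof -
  define G where "G = {{g \<in> (cfun X :: ('a \<Rightarrow> 'e) set). g ` K \<subseteq> U} | K U. compactin X K \<and> open U}"
  have co: "compact_open_topology X = topology_generated_by G" unfolding G_def compact_open_topology_def by simp
  have "\<Union>G \<subseteq> cfun X" unfolding G_def by auto
  moreover have "cfun X \<subseteq> \<Union>G"
  proof
    fix f :: "'a \<Rightarrow> 'e" assume "f \<in> cfun X"
    then have fm: "f \<in> {g \<in> (cfun X :: ('a \<Rightarrow> 'e) set). g ` {} \<subseteq> UNIV}" by simp
    have m: "{g \<in> (cfun X :: ('a \<Rightarrow> 'e) set). g ` {} \<subseteq> UNIV} \<in> G" unfolding G_def by blast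
    show "f \<in> \<Union>G" by (rule UnionI[OF m fm])
  qed
  ultimately show ?thesis unfolding co by simp
qed

lemma openin_compact_open_topology_subbasic:
  assumes "compactin X K" "open U"
  shows "openin (compact_open_topology X) {f \<in> cfun X. f ` K \<subseteq> (U :: 'e::real_normed_vector set)}"
  unfolding compact_open_topology_def
  by (rule topology_generated_by_Basis) (use assms in blast)

text \<open>The \<open>Kx x\<close> are the compact pieces of \<open>K\<close> on which \<open>f1\<close> stays within \<open>\<delta>/3\<close> of
  \<open>f1 x\<close>, for a finite set of points \<open>x\<close> whose \<open>\<delta>/3\<close>-neighbourhoods cover \<open>K\<close>.\<close>
lemma compact_open_topology_uniform_nbhd:
  fixes f1 :: "'a \<Rightarrow> 'e::real_normed_vector"
  assumes f1: "f1 \<in> cfun X" and K: "compactin X K" and d: "\<delta> > 0"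
  shows "\<exists>N. openin (compact_open_topology X) N \<and> f1 \<in> N \<and>
            (\<forall>f\<in>N. \<forall>x\<in>K. norm (f x - f1 x) \<le> \<delta>)"
proof -
  have cf1: "continuous_map X euclidean f1" using f1 by (rule cfunD)
  define Ob where "Ob = (\<lambda>x. {z \<in> topspace X. f1 z \<in> ball (f1 x) (\<delta>/3)})"
  have "openin X (Ob x)" for x
    unfolding Ob_def by (rule openin_continuous_map_preimage[OF cf1]) auto
  moreover have "K \<subseteq> \<Union>(Ob ` K)"
    using compactin_subset_topspace[OF K] d unfolding Ob_def by auto
  ultimately have "\<exists>F. finite F \<and> F \<subseteq> Ob ` K \<and> K \<subseteq> \<Union>F"
    by (intro compactinD[OF K]) auto
  then obtain F where F: "finite F" "F \<subseteq> Ob ` K" "K \<subseteq> \<Union>F"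
    by blast
  obtain Fn where Fn: "Fn \<subseteq> K" "finite Fn" "F = Ob ` Fn"
    using finite_subset_image[OF F(1) F(2)] by blast
  define Kx where "Kx = (\<lambda>x. {z \<in> topspace X. f1 z \<in> cball (f1 x) (\<delta>/3)} \<inter> K)"
  have Kx: "compactin X (Kx x)" for x
    unfolding Kx_def
    by (rule closed_Int_compactin[OF closedin_continuous_map_preimage[OF cf1] K]) auto
  define N where
    "N = (\<Inter>x\<in>Fn. {f \<in> cfun X. f ` Kx x \<subseteq> ball (f1 x) (\<delta>/2)}) \<inter> topspace (compact_open_topology X)"
  have "openin (compact_open_topology X) N"
    unfolding N_def by (intro openin_INT Fn(2) openin_compact_open_topology_subbasic Kx) auto
  moreover have "f1 ` Kx x \<subseteq> ball (f1 x) (\<delta>/2)" for x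
    using d unfolding Kx_def by auto
  then have "f1 \<in> N"
    using f1 unfolding N_def topspace_compact_open_topology by blast
  moreover have "norm (f x' - f1 x') \<le> \<delta>" if f: "f \<in> N" and x': "x' \<in> K" for f x'
  proof -
    have "x' \<in> \<Union>(Ob ` Fn)" using F(3) x' unfolding Fn(3) by (rule subsetD)
    then obtain x where x: "x \<in> Fn" "x' \<in> Ob x" by (rule UN_E)
    then have "x' \<in> Kx x" using x' unfolding Ob_def Kx_def by auto
    moreover have "f ` Kx x \<subseteq> ball (f1 x) (\<delta>/2)" using f x(1) unfolding N_def by auto
    ultimately have "dist (f1 x) (f x') < \<delta>/2" by auto
    moreover have "dist (f1 x) (f1 x') < \<delta>/3" using x(2) unfolding Ob_def by auto
    moreover have "dist (f x') (f1 x') \<le> dist (f1 x) (f x') + dist (f1 x) (f1 x')"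
      using dist_triangle[of "f x'" "f1 x'" "f1 x"] by (simp add: dist_commute)
    ultimately have "dist (f x') (f1 x') < \<delta>/2 + \<delta>/3" by linarith
    then show ?thesis using d by (simp add: dist_norm)
  qed
  ultimately show ?thesis by blast
qed

definition bump :: "real \<Rightarrow> real" where
  "bump t = (1 + cos (pi * t)) / 2"

definition nearest_even :: "real \<Rightarrow> real" where
  "nearest_even t = 2 * of_int (round (t / 2))"

lemma continuous_on_bump: "continuous_on UNIV bump"
  unfolding bump_def by (intro continuous_intros) auto

lemma bump_bounds: "0 \<le> bump t" "bump t \<le> 1"
  unfolding bump_def using cos_ge_minus_one[of "pi * t"] cos_le_one[of "pi * t"]
  by (simp_all del: cos_ge_minus_one cos_le_one)

lemma bump_add_shift: "bump t + bump (t + 1) = 1"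
  unfolding bump_def by (simp add: distrib_left field_simps)

lemma bump_odd: "bump (2 * of_int m + 1) = 0"
proof -
  have "cos (pi * (2 * of_int m + 1)) = cos (pi * of_int (2 * m + 1))" by simp
  also have "\<dots> = -1" by (subst cos_npi_int) auto
  finally show ?thesis unfolding bump_def by simp
qed

lemma nearest_even_dist: "\<bar>t - nearest_even t\<bar> \<le> 1"
  using of_int_round_abs_le[of "t / 2"] unfolding nearest_even_def by linarith

lemma nearest_even_eqI: "\<bar>t - 2 * of_int m\<bar> < 1 \<Longrightarrow> nearest_even t = 2 * of_int m"
proof -
  assume "\<bar>t - 2 * of_int m\<bar> < 1"
  then have "\<bar>t / 2 - of_int m\<bar> < 1 / 2" unfolding abs_less_iff by linarith
  then show ?thesis unfolding nearest_even_def using round_unique'[of "t / 2" m] by simp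
qed

lemma nearest_even_even: "\<exists>m. nearest_even t = 2 * of_int m"
  unfolding nearest_even_def by blast

lemma odd_if_nearest_even_dist_1:
  assumes "\<not> \<bar>t - nearest_even t\<bar> < 1"
  obtains m where "t = 2 * of_int m + 1"
proof -
  obtain m where m: "nearest_even t = 2 * of_int m" using nearest_even_even by blast
  then have "t = 2 * of_int m + 1 \<or> t = 2 * of_int m - 1"
    using assms nearest_even_dist[of t] by linarith
  then show ?thesis using that[of m] that[of "m - 1"] by auto
qed

text \<open>On each interval \<open>(2m - 1, 2m + 1)\<close> the function is \<open>\<psi> (2m)\<close> times \<open>bump\<close>, and \<open>bump\<close>
  vanishes at the odd endpoints: so it is continuous for every weight \<open>\<psi>\<close>.\<close>
definition even_bump :: "(real \<Rightarrow> real) \<Rightarrow> real \<Rightarrow> real" where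
  "even_bump \<psi> t = \<psi> (nearest_even t) * bump t"

lemma isCont_even_bump_odd: "isCont (even_bump \<psi>) (2 * of_int m + 1)"
proof -
  define t0 :: real where "t0 = 2 * of_int m + 1"
  define K where "K = max \<bar>\<psi> (2 * of_int m)\<bar> \<bar>\<psi> (2 * of_int (m + 1))\<bar>"
  have bump0: "bump t0 = 0" unfolding t0_def by (rule bump_odd)
  have "\<bar>even_bump \<psi> t\<bar> \<le> K * bump t" if "\<bar>t - t0\<bar> < 1" for t
  proof (cases "t = t0")
    case False
    then have "\<bar>t - 2 * of_int m\<bar> < 1 \<or> \<bar>t - 2 * of_int (m + 1)\<bar> < 1"
      using that unfolding t0_def by auto
    then have "\<bar>\<psi> (nearest_even t)\<bar> \<le> K"
      unfolding K_def using nearest_even_eqI by fastforce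
    then show ?thesis
      unfolding even_bump_def using bump_bounds[of t] by (simp add: abs_mult mult_right_mono)
  qed (simp add: even_bump_def bump0)
  moreover have "eventually (\<lambda>t. \<bar>t - t0\<bar> < 1) (at t0)"
    using eventually_at_ball[of 1 t0 UNIV] by (auto simp: dist_real_def abs_minus_commute elim: eventually_mono)
  ultimately have "eventually (\<lambda>t. norm (even_bump \<psi> t) \<le> K * bump t) (at t0)"
    by (auto elim: eventually_mono)
  moreover have "((\<lambda>t. K * bump t) \<longlongrightarrow> 0) (at t0)"
    using continuous_on_bump bump0 tendsto_mult_left[of bump 0 "at t0" K]
    by (metis continuous_on_eq_continuous_at isCont_def mult_zero_right open_UNIV UNIV_I)
  ultimately have "(even_bump \<psi> \<longlongrightarrow> 0) (at t0)" by (rule Lim_null_comparison)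
  then show ?thesis unfolding isCont_def t0_def[symmetric] even_bump_def by (simp add: bump0)
qed

lemma continuous_on_even_bump: "continuous_on UNIV (even_bump \<psi>)"
  unfolding continuous_on_eq_continuous_at[OF open_UNIV]
proof
  fix t0 :: real
  show "isCont (even_bump \<psi>) t0"
  proof (cases "\<bar>t0 - nearest_even t0\<bar> < 1")
    case True
    obtain m where m: "nearest_even t0 = 2 * of_int m" using nearest_even_even by blast
    define d where "d = 1 - \<bar>t0 - nearest_even t0\<bar>"
    have "eventually (\<lambda>t. t \<in> ball t0 d) (nhds t0)"
      using True unfolding d_def by (intro eventually_nhds_in_open) auto
    then have ev: "eventually (\<lambda>t. \<psi> (2 * of_int m) * bump t = even_bump \<psi> t) (nhds t0)"
    proof (rule eventually_mono)
      fix t assume "t \<in> ball t0 d"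
      then have "\<bar>t - 2 * of_int m\<bar> < 1" using m unfolding d_def by (auto simp: dist_real_def)
      then show "\<psi> (2 * of_int m) * bump t = even_bump \<psi> t"
        unfolding even_bump_def using nearest_even_eqI by simp
    qed
    moreover have "isCont (\<lambda>t. \<psi> (2 * of_int m) * bump t) t0"
      using continuous_on_bump by (intro continuous_intros) (simp add: continuous_on_eq_continuous_at)
    ultimately show ?thesis using isCont_cong[OF ev] by simp
  next
    case False
    then show ?thesis using isCont_even_bump_odd by (metis odd_if_nearest_even_dist_1)
  qed
qed

definition linear_growth :: "(real \<Rightarrow> real) \<Rightarrow> bool" where
  "linear_growth \<beta> \<longleftrightarrow> continuous_on UNIV \<beta> \<and> (\<exists>c. \<forall>t. \<bar>\<beta> t\<bar> \<le> c * (\<bar>t\<bar> + 1))"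

lemma linear_growthD:
  assumes "linear_growth \<beta>"
  shows "continuous_on UNIV \<beta>" "\<exists>c\<ge>0. \<forall>t. \<bar>\<beta> t\<bar> \<le> c * (\<bar>t\<bar> + 1)"
proof -
  show "continuous_on UNIV \<beta>" using assms unfolding linear_growth_def by simp
  obtain c where c: "\<forall>t. \<bar>\<beta> t\<bar> \<le> c * (\<bar>t\<bar> + 1)" using assms unfolding linear_growth_def by blast
  moreover have "c \<ge> 0" using c[rule_format, of 0] by simp
  ultimately show "\<exists>c\<ge>0. \<forall>t. \<bar>\<beta> t\<bar> \<le> c * (\<bar>t\<bar> + 1)" by blast
qed

lemma linear_growth_bump: "linear_growth bump"
  unfolding linear_growth_def
proof (intro conjI continuous_on_bump exI allI)
  show "\<bar>bump t\<bar> \<le> 1 * (\<bar>t\<bar> + 1)" for t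
    unfolding mult_1 using bump_bounds[of t] abs_ge_zero[of t] by linarith
qed

lemma linear_growth_even_bump:
  assumes "\<And>t. \<bar>\<psi> (nearest_even t)\<bar> \<le> c * (\<bar>t\<bar> + 1)"
  shows "linear_growth (even_bump \<psi>)"
  unfolding linear_growth_def
proof (intro conjI continuous_on_even_bump exI allI)
  fix t
  have "\<bar>even_bump \<psi> t\<bar> \<le> \<bar>\<psi> (nearest_even t)\<bar>"
    unfolding even_bump_def using bump_bounds[of t] by (simp add: abs_mult mult_left_le)
  then show "\<bar>even_bump \<psi> t\<bar> \<le> c * (\<bar>t\<bar> + 1)" using assms[of t] by linarith
qed

lemma linear_growth_bounded_even_bump:
  assumes "\<And>k. \<bar>\<psi> k\<bar> \<le> 1"
  shows "linear_growth (even_bump \<psi>)"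
proof (rule linear_growth_even_bump[where c = 1])
  show "\<bar>\<psi> (nearest_even t)\<bar> \<le> 1 * (\<bar>t\<bar> + 1)" for t
    unfolding mult_1 using assms[of "nearest_even t"] abs_ge_zero[of t] by linarith
qed

lemma linear_growth_even_bump_id: "linear_growth (even_bump (\<lambda>k. k))"
proof (rule linear_growth_even_bump[where c = 1])
  show "\<bar>nearest_even t\<bar> \<le> 1 * (\<bar>t\<bar> + 1)" for t
    unfolding mult_1 using nearest_even_dist[of t] by linarith
qed

lemma linear_growth_diff: "linear_growth a \<Longrightarrow> linear_growth b \<Longrightarrow> linear_growth (\<lambda>t. a t - b t)"
  unfolding linear_growth_def
proof (elim conjE exE, intro conjI continuous_intros exI allI)
  fix ca cb t assume "\<forall>t. \<bar>a t\<bar> \<le> ca * (\<bar>t\<bar> + 1)" "\<forall>t. \<bar>b t\<bar> \<le> cb * (\<bar>t\<bar> + 1)"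
  then have "\<bar>a t\<bar> \<le> ca * (\<bar>t\<bar> + 1)" "\<bar>b t\<bar> \<le> cb * (\<bar>t\<bar> + 1)" by auto
  then show "\<bar>a t - b t\<bar> \<le> (ca + cb) * (\<bar>t\<bar> + 1)"
    using abs_triangle_ineq4[of "a t" "b t"] by (simp add: distrib_right)
qed auto

lemma linear_growth_cmult: "linear_growth a \<Longrightarrow> linear_growth (\<lambda>t. k * a t)"
  unfolding linear_growth_def
proof (elim conjE exE, intro conjI continuous_intros exI allI)
  fix ca t assume "\<forall>t. \<bar>a t\<bar> \<le> ca * (\<bar>t\<bar> + 1)"
  then have "\<bar>k\<bar> * \<bar>a t\<bar> \<le> \<bar>k\<bar> * (ca * (\<bar>t\<bar> + 1))" by (simp add: mult_left_mono)
  then show "\<bar>k * a t\<bar> \<le> (\<bar>k\<bar> * ca) * (\<bar>t\<bar> + 1)" by (simp add: abs_mult mult.assoc)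
qed auto

lemma linear_growth_shift: "linear_growth \<beta> \<Longrightarrow> linear_growth (\<lambda>t. \<beta> (t + 1))"
proof -
  assume b: "linear_growth \<beta>"
  obtain c where c: "c \<ge> 0" "\<forall>t. \<bar>\<beta> t\<bar> \<le> c * (\<bar>t\<bar> + 1)" using linear_growthD(2)[OF b] by blast
  have "continuous_on UNIV (\<lambda>t. \<beta> (t + 1))"
    by (rule continuous_on_compose2[OF linear_growthD(1)[OF b]]) (auto intro: continuous_intros)
  moreover have "\<bar>\<beta> (t + 1)\<bar> \<le> (2 * c) * (\<bar>t\<bar> + 1)" for t
  proof -
    have "\<bar>\<beta> (t + 1)\<bar> \<le> c * (\<bar>t + 1\<bar> + 1)" using c(2) by blast
    also have "\<dots> \<le> c * (2 * (\<bar>t\<bar> + 1))" using c(1) by (intro mult_left_mono) auto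
    finally show ?thesis by (simp add: algebra_simps)
  qed
  ultimately show ?thesis unfolding linear_growth_def by blast
qed

definition modulation :: "('a \<Rightarrow> real) \<Rightarrow> ('a \<Rightarrow> 'e::real_normed_vector) \<Rightarrow> (real \<Rightarrow> real) \<Rightarrow> 'a \<Rightarrow> 'e" where
  "modulation u f \<beta> = (\<lambda>x. \<beta> (u x) *\<^sub>R f x)"

lemma modulation_diff: "modulation u f (\<lambda>t. a t - b t) = (\<lambda>x. modulation u f a x - modulation u f b x)"
  unfolding modulation_def by (simp add: scaleR_diff_left)

lemma modulation_cmult: "modulation u f (\<lambda>t. k * a t) = (\<lambda>x. k *\<^sub>R modulation u f a x)"
  unfolding modulation_def by simp

lemma modulation_nonzero: "modulation u f a x \<noteq> 0 \<longleftrightarrow> a (u x) \<noteq> 0 \<and> f x \<noteq> 0"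
  unfolding modulation_def by simp

lemma modulation_continuous_in_cfun:
  "continuous_map X euclideanreal u \<Longrightarrow> f \<in> cfun X \<Longrightarrow> linear_growth \<beta> \<Longrightarrow>
    modulation u f \<beta> \<in> cfun X"
  unfolding modulation_def
  by (rule cfun_real_scaleR)
    (use continuous_map_compose[of X euclideanreal u euclideanreal \<beta>] linear_growthD(1) in \<open>auto simp: o_def\<close>)

text \<open>With \<open>u = 1 / sqrt (norm f)\<close> a linearly growing profile costs at most a factor
  \<open>sqrt (norm f)\<close>, so the modulated function still tends to 0 where \<open>f\<close> does.\<close>
lemma modulation_inverse_sqrt_in_cfun:
  assumes f: "f \<in> cfun X" and \<beta>: "linear_growth \<beta>"
  shows "modulation (\<lambda>x. inverse (sqrt (norm (f x)))) f \<beta> \<in> cfun X"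
proof -
  define u where "u = (\<lambda>x. inverse (sqrt (norm (f x))))"
  obtain c where c: "c \<ge> 0" "\<forall>t. \<bar>\<beta> t\<bar> \<le> c * (\<bar>t\<bar> + 1)" using linear_growthD(2)[OF \<beta>] by blast
  have cf: "continuous_map X euclidean f" using f by (rule cfunD)
  let ?U = "{x \<in> topspace X. f x \<noteq> 0}"
  have cfU: "continuous_map (subtopology X ?U) euclidean f"
    by (rule continuous_map_from_subtopology[OF cf])
  have "continuous_map (subtopology X ?U) euclideanreal u"
    unfolding u_def by (intro continuous_map_real_inverse continuous_map_sqrt continuous_map_norm cfU) auto
  then have "continuous_map (subtopology X ?U) euclideanreal (\<lambda>x. \<beta> (u x))"
    using continuous_map_compose[of _ euclideanreal u euclideanreal \<beta>] linear_growthD(1)[OF \<beta>]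
    by (simp add: o_def)
  then have "continuous_map (subtopology X ?U) euclidean (modulation u f \<beta>)"
    unfolding modulation_def by (intro continuous_map_real_scaleR cfU)
  moreover have "norm (modulation u f \<beta> x) \<le> c * (sqrt (norm (f x)) + norm (f x))" for x
  proof (cases "f x = 0")
    case False
    let ?n = "norm (f x)"
    have "norm (modulation u f \<beta> x) = \<bar>\<beta> (u x)\<bar> * ?n" unfolding modulation_def by simp
    also have "\<dots> \<le> c * (\<bar>u x\<bar> + 1) * ?n" using c(2) by (intro mult_right_mono) auto
    also have "\<bar>u x\<bar> * ?n = sqrt ?n"
    proof -
      have "\<bar>u x\<bar> * ?n = ?n / sqrt ?n" unfolding u_def by (simp add: divide_inverse mult.commute)
      also have "\<dots> = sqrt ?n" by (rule real_div_sqrt) simp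
      finally show ?thesis .
    qed
    then have "c * (\<bar>u x\<bar> + 1) * ?n = c * (sqrt ?n + ?n)" by (simp add: algebra_simps)
    finally show ?thesis .
  qed (simp add: modulation_def c(1))
  moreover have "continuous_on UNIV (\<lambda>s. c * (sqrt s + s))" by (intro continuous_intros)
  ultimately have "continuous_map X euclidean (modulation u f \<beta>)"
    by (intro continuous_map_dominated_off_zeros[OF cf, where \<rho> = "\<lambda>s. c * (sqrt s + s)"]) auto
  then show ?thesis
    using cfunD(2)[OF f] unfolding u_def cfun_def modulation_def by auto
qed

definition bump_block :: "real \<Rightarrow> real \<Rightarrow> real" where
  "bump_block k = even_bump (\<lambda>j. if j = k then 1 else 0)"

definition bump_tail :: "real \<Rightarrow> real \<Rightarrow> real" where
  "bump_tail K = even_bump (\<lambda>j. if K < \<bar>j\<bar> then 1 else 0)"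

lemma linear_growth_bump_tail: "linear_growth (bump_tail K)"
  unfolding bump_tail_def by (rule linear_growth_bounded_even_bump) simp

lemma linear_growth_bump_block: "linear_growth (bump_block k)"
  unfolding bump_block_def by (rule linear_growth_bounded_even_bump) simp

lemma bump_eq_bump_block: "bump_block k t \<noteq> 0 \<Longrightarrow> bump t = bump_block k t"
  unfolding bump_block_def even_bump_def by (simp split: if_splits)

lemma even_bump_id_eq_bump_block:
  "k * bump_block k t \<noteq> 0 \<Longrightarrow> even_bump (\<lambda>j. j) t = k * bump_block k t"
  unfolding bump_block_def even_bump_def by (simp split: if_splits)

locale linear_biseparating =
  fixes X :: "'a topology" and Y :: "'b topology"
    and T :: "('a \<Rightarrow> 'e::real_normed_vector) \<Rightarrow> ('b \<Rightarrow> 'f::real_normed_vector)"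
  assumes completely_regular_Y: "completely_regular_space Y"
    and realcompact_X: "realcompact_space X"
    and finite_dimensional_E: "\<exists>B::'e set. finite B \<and> span B = UNIV"
    and linear_T: "linear_on_cfun X T"
    and biseparating_T: "biseparating X Y T"
begin

abbreviation "Tinv \<equiv> inv_into (cfun X) T"

lemma bij_T: "bij_betw T (cfun X) (cfun Y)"
  using biseparating_T by (simp add: biseparating_def)

lemma T_in_cfun: "f \<in> cfun X \<Longrightarrow> T f \<in> cfun Y"
  using bij_T by (auto simp: bij_betw_def)

lemma Tinv_in_cfun: "g \<in> cfun Y \<Longrightarrow> Tinv g \<in> cfun X"
  using bij_T by (metis bij_betw_imp_surj_on inv_into_into)

lemma T_Tinv: "g \<in> cfun Y \<Longrightarrow> T (Tinv g) = g"
  using bij_T by (metis bij_betw_imp_surj_on f_inv_into_f)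

lemma Tinv_T: "f \<in> cfun X \<Longrightarrow> Tinv (T f) = f"
  using bij_T by (meson bij_betw_inv_into_left)

lemma T_add: "f \<in> cfun X \<Longrightarrow> g \<in> cfun X \<Longrightarrow> T (\<lambda>x. f x + g x) = (\<lambda>y. T f y + T g y)"
  using linear_T by (simp add: linear_on_cfun_def)

lemma T_scaleR: "f \<in> cfun X \<Longrightarrow> T (\<lambda>x. c *\<^sub>R f x) = (\<lambda>y. c *\<^sub>R T f y)"
  using linear_T by (simp add: linear_on_cfun_def)

lemma T_zero: "T (\<lambda>x. 0) = (\<lambda>y. 0)"
  using T_scaleR[OF cfun_zero, of 0] by simp

lemma T_diff:
  assumes f: "f \<in> cfun X" and g: "g \<in> cfun X"
  shows "T (\<lambda>x. f x - g x) y = T f y - T g y"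
proof -
  have "T (\<lambda>x. f x - g x) = T (\<lambda>x. f x + (-1) *\<^sub>R g x)" by simp
  also have "\<dots> = (\<lambda>y. T f y + T (\<lambda>x. (-1) *\<^sub>R g x) y)" by (rule T_add[OF f cfun_scaleR[OF g]])
  finally show ?thesis using T_scaleR[OF g, of "-1"] by simp
qed

lemma T_disjoint:
  "f \<in> cfun X \<Longrightarrow> g \<in> cfun X \<Longrightarrow> (\<And>x. f x \<noteq> 0 \<Longrightarrow> g x = 0) \<Longrightarrow> T f y = 0 \<or> T g y = 0"
  using biseparating_T
  by (intro separating_disjoint_supports[of X Y T]) (auto simp: biseparating_def T_in_cfun)

lemma Tinv_disjoint:
  "f \<in> cfun Y \<Longrightarrow> g \<in> cfun Y \<Longrightarrow> (\<And>y. f y \<noteq> 0 \<Longrightarrow> g y = 0) \<Longrightarrow> Tinv f x = 0 \<or> Tinv g x = 0"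
  using biseparating_T
  by (intro separating_disjoint_supports[of Y X Tinv]) (auto simp: biseparating_def Tinv_in_cfun)

lemma T_eq_of_piece:
  assumes f: "f \<in> cfun X" and g: "g \<in> cfun X" and piece: "\<And>x. g x \<noteq> 0 \<Longrightarrow> f x = g x"
    and "T g y \<noteq> 0"
  shows "T f y = T g y"
proof -
  have "T g y = 0 \<or> T (\<lambda>x. f x - g x) y = 0"
    using piece by (intro T_disjoint g cfun_diff f) auto
  then show ?thesis using \<open>T g y \<noteq> 0\<close> T_diff[OF f g] by simp
qed

definition null_at :: "'b \<Rightarrow> 'a set \<Rightarrow> bool" where
  "null_at y W \<longleftrightarrow> (\<forall>f\<in>cfun X. (\<forall>x. f x \<noteq> 0 \<longrightarrow> x \<in> W) \<longrightarrow> T f y = 0)"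

lemma null_atI:
  "(\<And>f. f \<in> cfun X \<Longrightarrow> (\<And>x. f x \<noteq> 0 \<Longrightarrow> x \<in> W) \<Longrightarrow> T f y = 0) \<Longrightarrow> null_at y W"
  unfolding null_at_def by blast

lemma null_atD: "null_at y W \<Longrightarrow> f \<in> cfun X \<Longrightarrow> (\<And>x. f x \<noteq> 0 \<Longrightarrow> x \<in> W) \<Longrightarrow> T f y = 0"
  unfolding null_at_def by blast

lemma not_null_atE:
  assumes "\<not> null_at y W"
  obtains f where "f \<in> cfun X" "\<And>x. f x \<noteq> 0 \<Longrightarrow> x \<in> W" "T f y \<noteq> 0"
  using assms unfolding null_at_def by blast

lemma null_at_subset: "null_at y W \<Longrightarrow> W' \<subseteq> W \<Longrightarrow> null_at y W'"
  unfolding null_at_def by blast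

lemma null_at_empty: "null_at y {}"
proof (rule null_atI)
  fix f :: "'a \<Rightarrow> 'e" assume "\<And>x. f x \<noteq> 0 \<Longrightarrow> x \<in> {}"
  then have "f = (\<lambda>x. 0)" by auto
  then show "T f y = 0" using T_zero by simp
qed

definition modulation_admissible :: "'b \<Rightarrow> ('a \<Rightarrow> real) \<Rightarrow> ('a \<Rightarrow> 'e) \<Rightarrow> bool" where
  "modulation_admissible y u f \<longleftrightarrow>
     (\<forall>\<beta>. linear_growth \<beta> \<longrightarrow> modulation u f \<beta> \<in> cfun X) \<and>
     (\<forall>\<beta> n. linear_growth \<beta> \<longrightarrow> (\<forall>t. n \<le> \<bar>t\<bar> \<longrightarrow> \<beta> t = 0) \<longrightarrow> T (modulation u f \<beta>) y = 0)"

lemma modulation_admissibleD: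
  assumes "modulation_admissible y u f" "linear_growth \<beta>"
  shows "modulation u f \<beta> \<in> cfun X"
    and "(\<And>t. n \<le> \<bar>t\<bar> \<Longrightarrow> \<beta> t = 0) \<Longrightarrow> T (modulation u f \<beta>) y = 0"
  using assms unfolding modulation_admissible_def by blast+

lemma T_modulation_bump_tail:
  assumes adm: "modulation_admissible y u f"
  shows "T (modulation u f (bump_tail K)) y = T (modulation u f bump) y"
proof -
  have "T (modulation u f (\<lambda>t. bump t - bump_tail K t)) y = 0"
  proof (rule modulation_admissibleD(2)[OF adm, of _ "\<bar>K\<bar> + 2"])
    show "linear_growth (\<lambda>t. bump t - bump_tail K t)"
      by (intro linear_growth_diff linear_growth_bump linear_growth_bump_tail)
    show "bump t - bump_tail K t = 0" if "\<bar>K\<bar> + 2 \<le> \<bar>t\<bar>" for t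
      using that nearest_even_dist[of t] unfolding bump_tail_def even_bump_def by auto
  qed
  moreover have "modulation u f bump \<in> cfun X" "modulation u f (bump_tail K) \<in> cfun X"
    using modulation_admissibleD(1)[OF adm] linear_growth_bump linear_growth_bump_tail by blast+
  ultimately show ?thesis using T_diff unfolding modulation_diff by simp
qed

lemma exists_cfun_T_supported_in:
  assumes V: "openin Y V" "y \<in> V"
  obtains p where "p \<in> cfun X" "T p y = w" "\<And>y'. T p y' \<noteq> 0 \<Longrightarrow> y' \<in> V"
proof -
  have "closedin Y (topspace Y - V)" "y \<in> topspace Y - (topspace Y - V)"
    using V openin_subset by auto
  then obtain \<psi> :: "'b \<Rightarrow> real" where
    \<psi>: "continuous_map Y (top_of_set {0..1}) \<psi>" "\<psi> y = 0" "\<psi> ` (topspace Y - V) \<subseteq> {1}"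
    using completely_regular_Y unfolding completely_regular_space_def by metis
  define \<phi> where "\<phi> = (\<lambda>y'. if y' \<in> topspace Y then (1 - \<psi> y') *\<^sub>R w else 0)"
  have "continuous_map Y euclidean (\<lambda>y'. (1 - \<psi> y') *\<^sub>R w)"
    using \<psi>(1) continuous_map_in_subtopology
    by (intro continuous_map_real_scaleR continuous_map_diff) auto
  then have \<phi>: "\<phi> \<in> cfun Y"
    unfolding cfun_def \<phi>_def by (auto elim: continuous_map_eq)
  show ?thesis
  proof (rule that[of "Tinv \<phi>"])
    show "Tinv \<phi> \<in> cfun X" by (rule Tinv_in_cfun[OF \<phi>])
    show "T (Tinv \<phi>) y = w" using T_Tinv[OF \<phi>] V \<psi>(2) openin_subset unfolding \<phi>_def by auto
    show "y' \<in> V" if "T (Tinv \<phi>) y' \<noteq> 0" for y'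
      using that T_Tinv[OF \<phi>] \<psi>(3) unfolding \<phi>_def by (auto split: if_splits)
  qed
qed

text \<open>If all blocks of \<open>modulation u f\<close> far out vanished on a neighbourhood \<open>V\<close> of \<open>y\<close>, a
  preimage under \<open>T\<close> of a function supported in \<open>V\<close> would be disjoint from the tail of
  \<open>modulation u f bump\<close>, although both have the same nonzero \<open>T\<close>-value at \<open>y\<close>.\<close>
lemma far_bump_block_nonzero:
  assumes adm: "modulation_admissible y u f"
    and w: "T (modulation u f bump) y \<noteq> 0" and V: "openin Y V" "y \<in> V"
  shows "\<exists>k y'. K < \<bar>k\<bar> \<and> y' \<in> V \<and> T (modulation u f (bump_block k)) y' \<noteq> 0"
proof (rule ccontr)
  assume "\<not> ?thesis"
  then have far_null: "T (modulation u f (bump_block k)) y' = 0" if "K < \<bar>k\<bar>" "y' \<in> V" for k y'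
    using that by blast
  define tail where "tail = modulation u f (bump_tail K)"
  have tail: "tail \<in> cfun X"
    unfolding tail_def by (rule modulation_admissibleD(1)[OF adm linear_growth_bump_tail])
  obtain p where p: "p \<in> cfun X" "T p y = T (modulation u f bump) y" "\<And>y'. T p y' \<noteq> 0 \<Longrightarrow> y' \<in> V"
    using exists_cfun_T_supported_in[OF V] by metis
  have "p x = 0" if "tail x \<noteq> 0" for x
  proof -
    define k where "k = nearest_even (u x)"
    have k: "K < \<bar>k\<bar>" and block_x: "modulation u f (bump_block k) x \<noteq> 0"
      using that unfolding k_def tail_def modulation_def bump_tail_def bump_block_def even_bump_def
      by (auto split: if_splits)
    have block: "modulation u f (bump_block k) \<in> cfun X"
      by (rule modulation_admissibleD(1)[OF adm linear_growth_bump_block])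
    have "Tinv (T p) x = 0 \<or> Tinv (T (modulation u f (bump_block k))) x = 0"
      using p(3) far_null[OF k] by (intro Tinv_disjoint T_in_cfun p(1) block) blast
    then show ?thesis using Tinv_T[OF block] Tinv_T[OF p(1)] block_x by simp
  qed
  then have "T tail y = 0 \<or> T p y = 0" by (intro T_disjoint[OF tail p(1)]) auto
  then show False using T_modulation_bump_tail[OF adm] w p(2) unfolding tail_def by simp
qed

text \<open>\<open>modulation u f (even_bump (\<lambda>j. j))\<close> is the sum over even \<open>k\<close> of \<open>k\<close> times the blocks,
  so at a point where a far block is seen its \<open>T\<close>-value is \<open>k\<close> times that of
  \<open>modulation u f bump\<close>, which contradicts continuity at \<open>y\<close> unless the latter vanishes.\<close>
lemma T_modulation_bump_vanishes:
  assumes adm: "modulation_admissible y u f" and y: "y \<in> topspace Y"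
  shows "T (modulation u f bump) y = 0"
proof (rule ccontr)
  define g where "g = modulation u f bump"
  define G where "G = modulation u f (even_bump (\<lambda>j. j))"
  assume nonzero: "T (modulation u f bump) y \<noteq> 0"
  then have w: "norm (T g y) > 0" unfolding g_def by simp
  have g: "g \<in> cfun X" unfolding g_def by (rule modulation_admissibleD(1)[OF adm linear_growth_bump])
  have G: "G \<in> cfun X"
    unfolding G_def by (rule modulation_admissibleD(1)[OF adm linear_growth_even_bump_id])
  define M where "M = norm (T G y) + 1"
  define V where "V = {y' \<in> topspace Y. norm (T G y') \<in> {..<M}} \<inter>
                      {y' \<in> topspace Y. norm (T g y') \<in> {norm (T g y) / 2<..}}"
  have "openin Y V"
    unfolding V_def using T_in_cfun[OF g] T_in_cfun[OF G]
    by (intro openin_Int openin_continuous_map_preimage[OF continuous_map_norm]) (auto dest: cfunD)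
  moreover have "y \<in> V" unfolding V_def M_def using y w by simp
  ultimately obtain k y' where k: "2 * M / norm (T g y) < \<bar>k\<bar>" and "y' \<in> V"
    and block: "T (modulation u f (bump_block k)) y' \<noteq> 0"
    using far_bump_block_nonzero[OF adm nonzero, of V "2 * M / norm (T g y)"] by blast
  then have bounds: "norm (T G y') < M" "norm (T g y) / 2 < norm (T g y')" unfolding V_def by auto
  have M: "M > 0" unfolding M_def by (simp add: add_nonneg_pos)
  then have "k \<noteq> 0" using k w by (auto simp: field_simps)
  have block_in: "modulation u f (bump_block k) \<in> cfun X"
    by (rule modulation_admissibleD(1)[OF adm linear_growth_bump_block])
  have "T g y' = T (modulation u f (bump_block k)) y'"
    unfolding g_def using bump_eq_bump_block block
    by (intro T_eq_of_piece modulation_admissibleD(1)[OF adm] linear_growth_bump linear_growth_bump_block)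
      (auto simp: modulation_def)
  moreover have T_kblock:
    "T (modulation u f (\<lambda>t. k * bump_block k t)) y' = k *\<^sub>R T (modulation u f (bump_block k)) y'"
    unfolding modulation_cmult T_scaleR[OF block_in] ..
  moreover have "T G y' = T (modulation u f (\<lambda>t. k * bump_block k t)) y'"
    unfolding G_def using even_bump_id_eq_bump_block T_kblock block \<open>k \<noteq> 0\<close>
    by (intro T_eq_of_piece modulation_admissibleD(1)[OF adm] linear_growth_even_bump_id
        linear_growth_cmult linear_growth_bump_block) (auto simp: modulation_def)
  ultimately have "T G y' = k *\<^sub>R T g y'" by simp
  have "M < \<bar>k\<bar> * (norm (T g y) / 2)" using k w by (simp add: field_simps)
  also have "\<dots> \<le> \<bar>k\<bar> * norm (T g y')" using bounds(2) by (intro mult_left_mono) auto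
  also have "\<dots> = norm (T G y')" using \<open>T G y' = k *\<^sub>R T g y'\<close> by simp
  finally show False using bounds(1) by simp
qed

lemma modulation_admissible_shift:
  assumes adm: "modulation_admissible y u f"
  shows "modulation_admissible y (\<lambda>x. u x + 1) f"
  unfolding modulation_admissible_def
proof (intro conjI allI impI)
  have shift: "modulation (\<lambda>x. u x + 1) f \<beta> = modulation u f (\<lambda>t. \<beta> (t + 1))" for \<beta>
    unfolding modulation_def by simp
  fix \<beta> assume \<beta>: "linear_growth \<beta>"
  show "modulation (\<lambda>x. u x + 1) f \<beta> \<in> cfun X"
    unfolding shift by (rule modulation_admissibleD(1)[OF adm linear_growth_shift[OF \<beta>]])
  fix n :: real assume "\<forall>t. n \<le> \<bar>t\<bar> \<longrightarrow> \<beta> t = 0"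
  then show "T (modulation (\<lambda>x. u x + 1) f \<beta>) y = 0"
    unfolding shift by (intro modulation_admissibleD(2)[OF adm linear_growth_shift[OF \<beta>], of "n + 1"]) auto
qed

text \<open>Split \<open>f\<close> with the partition of unity \<open>bump t + bump (t + 1) = 1\<close>.\<close>
lemma T_vanishes_if_modulation_admissible:
  assumes adm: "modulation_admissible y u f" and y: "y \<in> topspace Y" and f: "f \<in> cfun X"
  shows "T f y = 0"
proof -
  have shift: "modulation (\<lambda>x. u x + 1) f bump = modulation u f (\<lambda>t. bump (t + 1))"
    unfolding modulation_def by simp
  have "f = (\<lambda>x. modulation u f bump x + modulation (\<lambda>x. u x + 1) f bump x)"
    unfolding modulation_def by (simp add: scaleR_add_left[symmetric] bump_add_shift)
  then have "T f y = T (modulation u f bump) y + T (modulation (\<lambda>x. u x + 1) f bump) y"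
    using T_add modulation_admissibleD(1)[OF adm linear_growth_bump]
      modulation_admissibleD(1)[OF modulation_admissible_shift[OF adm] linear_growth_bump]
    by metis
  then show ?thesis
    using T_modulation_bump_vanishes[OF adm y] T_modulation_bump_vanishes[OF modulation_admissible_shift[OF adm] y]
    by simp
qed

end

definition basic_box_nbhd :: "'i set \<Rightarrow> ('i \<Rightarrow> real set) \<Rightarrow> ('i \<Rightarrow> real) \<Rightarrow> bool" where
  "basic_box_nbhd I U p \<longleftrightarrow> finite {i \<in> I. U i \<noteq> UNIV} \<and> (\<forall>i\<in>I. open (U i)) \<and> p \<in> PiE I U"

lemma openin_powertop_real_basic_box_nbhd:
  "openin (powertop_real I) W \<Longrightarrow> p \<in> W \<Longrightarrow> \<exists>U. basic_box_nbhd I U p \<and> PiE I U \<subseteq> W"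
  unfolding basic_box_nbhd_def openin_product_topology_alt by auto

lemma mem_closedin_powertop_real_basic_box_nbhd:
  assumes S: "closedin (powertop_real I) S" and p: "p \<in> topspace (powertop_real I)"
    and meets: "\<And>U. basic_box_nbhd I U p \<Longrightarrow> PiE I U \<inter> S \<noteq> {}"
  shows "p \<in> S"
proof (rule ccontr)
  assume "p \<notin> S"
  have "openin (powertop_real I) (topspace (powertop_real I) - S)"
    using S by (simp add: closedin_def)
  then obtain U where "basic_box_nbhd I U p" "PiE I U \<subseteq> topspace (powertop_real I) - S"
    using openin_powertop_real_basic_box_nbhd p \<open>p \<notin> S\<close> by blast
  then show False using meets by blast
qed

lemma closed_embedding_powertop_real_basic_nbhds:
  assumes hm: "homeomorphic_maps X (subtopology (powertop_real I) S) \<phi> \<psi>"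
    and S: "closedin (powertop_real I) S" and p: "p \<in> topspace (powertop_real I)"
    and meets: "\<And>U. basic_box_nbhd I U p \<Longrightarrow> \<exists>x\<in>topspace X. \<phi> x \<in> PiE I U"
  shows "\<exists>x0\<in>topspace X. \<forall>V. openin X V \<longrightarrow> x0 \<in> V \<longrightarrow>
           (\<exists>U. basic_box_nbhd I U p \<and> {x \<in> topspace X. \<phi> x \<in> PiE I U} \<subseteq> V)"
proof -
  have \<psi>: "continuous_map (subtopology (powertop_real I) S) X \<psi>"
    and \<psi>\<phi>: "\<And>x. x \<in> topspace X \<Longrightarrow> \<psi> (\<phi> x) = x"
    and \<phi>\<psi>: "\<And>z. z \<in> topspace (subtopology (powertop_real I) S) \<Longrightarrow> \<phi> (\<psi> z) = z"
    using hm unfolding homeomorphic_maps_def by auto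
  have \<phi>S: "\<phi> x \<in> S" if "x \<in> topspace X" for x
    using hm that unfolding homeomorphic_maps_def continuous_map_in_subtopology by auto
  have "p \<in> S"
    using meets \<phi>S by (intro mem_closedin_powertop_real_basic_box_nbhd[OF S p]) blast
  then have pS: "p \<in> topspace (subtopology (powertop_real I) S)" using p by simp
  define x0 where "x0 = \<psi> p"
  have x0: "x0 \<in> topspace X" unfolding x0_def using \<psi> pS by (auto simp: continuous_map_def)
  moreover have "\<exists>U. basic_box_nbhd I U p \<and> {x \<in> topspace X. \<phi> x \<in> PiE I U} \<subseteq> V"
    if V: "openin X V" "x0 \<in> V" for V
  proof -
    have "homeomorphic_map X (subtopology (powertop_real I) S) \<phi>"
      using hm homeomorphic_map_maps by blast
    then have "openin (subtopology (powertop_real I) S) (\<phi> ` V)"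
      using homeomorphic_map_openness[OF _ openin_subset[OF V(1)]] V(1) by simp
    then obtain W where W: "openin (powertop_real I) W" "\<phi> ` V = W \<inter> S"
      unfolding openin_subtopology by blast
    have "\<phi> x0 \<in> \<phi> ` V" using V(2) by blast
    then have "p \<in> W" using W(2) \<phi>\<psi>[OF pS] unfolding x0_def by simp
    then obtain U where U: "basic_box_nbhd I U p" "PiE I U \<subseteq> W"
      using openin_powertop_real_basic_box_nbhd[OF W(1)] by blast
    have "x \<in> V" if x: "x \<in> topspace X" "\<phi> x \<in> PiE I U" for x
    proof -
      have "\<phi> x \<in> \<phi> ` V" using U(2) W(2) \<phi>S[OF x(1)] x(2) by blast
      then obtain x' where x': "x' \<in> V" "\<phi> x = \<phi> x'" by blast
      moreover have "x' \<in> topspace X" using openin_subset[OF V(1)] x'(1) by blast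
      ultimately show ?thesis using \<psi>\<phi>[OF x(1)] \<psi>\<phi>[of x'] by metis
    qed
    then show ?thesis using U(1) by blast
  qed
  ultimately show ?thesis by blast
qed

context linear_biseparating
begin

lemma T_split_cutoff:
  assumes f: "f \<in> cfun X" and l: "continuous_map X euclideanreal l"
  shows "T f y = T (\<lambda>x. l x *\<^sub>R f x) y + T (\<lambda>x. (1 - l x) *\<^sub>R f x) y"
proof -
  have "(\<lambda>x. l x *\<^sub>R f x + (1 - l x) *\<^sub>R f x) = f" by (simp add: scaleR_add_left[symmetric])
  moreover have "T (\<lambda>x. l x *\<^sub>R f x + (1 - l x) *\<^sub>R f x) =
      (\<lambda>y. T (\<lambda>x. l x *\<^sub>R f x) y + T (\<lambda>x. (1 - l x) *\<^sub>R f x) y)"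
    using continuous_map_diff[OF continuous_map_canonical_const l] by (intro T_add cfun_real_scaleR f l)
  ultimately show ?thesis by simp
qed

lemma null_at_cutoff:
  assumes l: "continuous_map X euclideanreal l"
    and "null_at y {x \<in> W. l x \<noteq> 0}" "null_at y {x \<in> W. l x \<noteq> 1}"
  shows "null_at y W"
proof (rule null_atI)
  fix f :: "'a \<Rightarrow> 'e" assume f: "f \<in> cfun X" and W: "\<And>x. f x \<noteq> 0 \<Longrightarrow> x \<in> W"
  have l': "continuous_map X euclideanreal (\<lambda>x. 1 - l x)"
    by (rule continuous_map_diff[OF continuous_map_canonical_const l])
  have "T (\<lambda>x. l x *\<^sub>R f x) y = 0"
    by (rule null_atD[OF assms(2) cfun_real_scaleR[OF l f]]) (use W in auto)
  moreover have "T (\<lambda>x. (1 - l x) *\<^sub>R f x) y = 0"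
    by (rule null_atD[OF assms(3) cfun_real_scaleR[OF l' f]]) (use W in auto)
  ultimately show "T f y = 0" using T_split_cutoff[OF f l] by simp
qed

text \<open>The cutoff \<open>l\<close> is 1 on \<open>B\<close> and supported in \<open>C\<close>: if \<open>A \<inter> C\<close> were null, the part
  \<open>(1 - l) f\<close> of a witness \<open>f\<close> for \<open>A\<close> would carry its value at \<open>y\<close> while being disjoint from
  every function supported in \<open>B\<close>.\<close>
lemma not_null_at_Int_cutoff:
  assumes l: "continuous_map X euclideanreal l"
    and A: "\<not> null_at y A" and B: "\<not> null_at y B"
    and one_on_B: "\<And>x. x \<in> B \<Longrightarrow> l x = 1"
    and supp_C: "\<And>x. x \<in> topspace X \<Longrightarrow> l x \<noteq> 0 \<Longrightarrow> x \<in> C"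
  shows "\<not> null_at y (A \<inter> C)"
proof
  assume null: "null_at y (A \<inter> C)"
  obtain f where f: "f \<in> cfun X" "\<And>x. f x \<noteq> 0 \<Longrightarrow> x \<in> A" "T f y \<noteq> 0"
    using A by (rule not_null_atE) blast
  obtain g where g: "g \<in> cfun X" "\<And>x. g x \<noteq> 0 \<Longrightarrow> x \<in> B" "T g y \<noteq> 0"
    using B by (elim not_null_atE) blast
  have l': "continuous_map X euclideanreal (\<lambda>x. 1 - l x)"
    by (rule continuous_map_diff[OF continuous_map_canonical_const l])
  have "T (\<lambda>x. l x *\<^sub>R f x) y = 0"
    by (rule null_atD[OF null cfun_real_scaleR[OF l f(1)]])
      (use f(2) supp_C cfun_nonzero_in_topspace[OF f(1)] in auto)
  then have "T (\<lambda>x. (1 - l x) *\<^sub>R f x) y \<noteq> 0" using T_split_cutoff[OF f(1) l] f(3) by simp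
  moreover have "T (\<lambda>x. (1 - l x) *\<^sub>R f x) y = 0 \<or> T g y = 0"
    by (rule T_disjoint[OF cfun_real_scaleR[OF l' f(1)] g(1)]) (use one_on_B g(2) in force)
  ultimately show False using g(3) by simp
qed

definition slab :: "('a \<Rightarrow> real) \<Rightarrow> real \<Rightarrow> real \<Rightarrow> 'a set" where
  "slab u a b = {x \<in> topspace X. a < u x \<and> u x < b}"

lemma null_at_slab_union:
  assumes u: "continuous_map X euclideanreal u" and "c < b"
    and "null_at y (slab u a b)" "null_at y (slab u c d)"
  shows "null_at y (slab u a d)"
proof (rule null_at_cutoff)
  define l where "l = (\<lambda>x. min 1 (max 0 ((b - u x) / (b - c))))"
  show "continuous_map X euclideanreal l"
    unfolding l_def using \<open>c < b\<close> by (intro continuous_intros u) auto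
  have lt: "u x < b" if "l x \<noteq> 0" for x
  proof (rule ccontr)
    assume "\<not> u x < b"
    then have "(b - u x) / (b - c) \<le> 0" using \<open>c < b\<close> by (simp add: divide_nonpos_pos)
    then show False using that unfolding l_def by simp
  qed
  show "null_at y {x \<in> slab u a d. l x \<noteq> 0}"
    by (rule null_at_subset[OF assms(3)]) (use lt in \<open>auto simp: slab_def\<close>)
  have gt: "c < u x" if "l x \<noteq> 1" for x
  proof (rule ccontr)
    assume "\<not> c < u x"
    then have "(b - u x) / (b - c) \<ge> 1" using \<open>c < b\<close> by (simp add: le_divide_eq)
    then show False using that unfolding l_def by simp
  qed
  show "null_at y {x \<in> slab u a d. l x \<noteq> 1}"
    by (rule null_at_subset[OF assms(4)]) (use gt in \<open>auto simp: slab_def\<close>)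
qed

lemma bounded_slab_not_null:
  assumes y: "y \<in> topspace Y" and u: "continuous_map X euclideanreal u"
    and f: "f \<in> cfun X" and nz: "T f y \<noteq> 0"
  shows "\<exists>n. \<not> null_at y (slab u (-n) n)"
proof (rule ccontr)
  assume "\<nexists>n. \<not> null_at y (slab u (-n) n)"
  then have null: "null_at y (slab u (-n) n)" for n by blast
  have "T (modulation u f \<beta>) y = 0"
    if \<beta>: "linear_growth \<beta>" and vanish: "\<forall>t. n \<le> \<bar>t\<bar> \<longrightarrow> \<beta> t = 0" for \<beta> n
  proof -
    have "x \<in> slab u (-n) n" if "modulation u f \<beta> x \<noteq> 0" for x
    proof -
      have "\<beta> (u x) \<noteq> 0" "f x \<noteq> 0" using that by (auto simp: modulation_nonzero)
      then have "\<bar>u x\<bar> < n" "x \<in> topspace X"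
        using vanish cfun_nonzero_in_topspace[OF f] by (auto simp: not_le[symmetric])
      then show ?thesis unfolding slab_def by auto
    qed
    then show ?thesis
      using null_atD[OF null modulation_continuous_in_cfun[OF u f \<beta>]] by blast
  qed
  then have "modulation_admissible y u f"
    unfolding modulation_admissible_def using modulation_continuous_in_cfun[OF u f] by blast
  then show False using T_vanishes_if_modulation_admissible[OF _ y f] nz by blast
qed

definition support_value :: "'b \<Rightarrow> ('a \<Rightarrow> real) \<Rightarrow> real \<Rightarrow> bool" where
  "support_value y u t \<longleftrightarrow> (\<forall>\<delta>>0. \<not> null_at y {x \<in> topspace X. \<bar>u x - t\<bar> < \<delta>})"

lemma slab_eq_ball: "slab u (t - \<delta>) (t + \<delta>) = {x \<in> topspace X. \<bar>u x - t\<bar> < \<delta>}"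
  unfolding slab_def by auto

text \<open>If every value had a null slab around it, the supremum of the \<open>s\<close> for which
  \<open>slab u a s\<close> is null could be pushed beyond \<open>b\<close>.\<close>
lemma support_value_in_slab:
  assumes u: "continuous_map X euclideanreal u" and not_null: "\<not> null_at y (slab u a b)"
  shows "\<exists>t. support_value y u t"
proof (rule ccontr)
  assume "\<nexists>t. support_value y u t"
  then have local_null: "\<exists>\<delta>>0. null_at y (slab u (t - \<delta>) (t + \<delta>))" for t
    unfolding support_value_def slab_eq_ball by blast
  have "a < b"
  proof (rule ccontr)
    assume "\<not> a < b"
    then have "slab u a b = {}" by (auto simp: slab_def)
    then show False using not_null null_at_empty by simp
  qed
  define \<Sigma> where "\<Sigma> = {s. s \<le> b + 1 \<and> null_at y (slab u a s)}"
  have "slab u a a = {}" by (auto simp: slab_def)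
  then have "a \<in> \<Sigma>" unfolding \<Sigma>_def using \<open>a < b\<close> null_at_empty by simp
  then have ne: "\<Sigma> \<noteq> {}" by blast
  have bdd: "bdd_above \<Sigma>" unfolding \<Sigma>_def bdd_above_def by auto
  define \<sigma> where "\<sigma> = Sup \<Sigma>"
  have "b < \<sigma>"
  proof (rule ccontr)
    assume "\<not> b < \<sigma>"
    obtain \<delta>0 where \<delta>0: "\<delta>0 > 0" "null_at y (slab u (\<sigma> - \<delta>0) (\<sigma> + \<delta>0))" using local_null by blast
    define \<delta> where "\<delta> = min \<delta>0 1"
    have \<delta>: "\<delta> > 0" "\<delta> \<le> 1" using \<delta>0 unfolding \<delta>_def by auto
    have null_\<delta>: "null_at y (slab u (\<sigma> - \<delta>) (\<sigma> + \<delta>))"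
      by (rule null_at_subset[OF \<delta>0(2)]) (auto simp: slab_def \<delta>_def)
    obtain s where s: "s \<in> \<Sigma>" "\<sigma> - \<delta> < s"
      using less_cSup_iff[OF ne bdd, of "\<sigma> - \<delta>"] \<delta> unfolding \<sigma>_def by auto
    have "null_at y (slab u a (\<sigma> + \<delta>))"
      using s unfolding \<Sigma>_def by (intro null_at_slab_union[OF u _ _ null_\<delta>]) auto
    then have "\<sigma> + \<delta> \<in> \<Sigma>" unfolding \<Sigma>_def using \<open>\<not> b < \<sigma>\<close> \<delta> by simp
    then show False using cSup_upper[OF _ bdd] \<delta> unfolding \<sigma>_def by fastforce
  qed
  then obtain s where s: "s \<in> \<Sigma>" "b < s" using less_cSup_iff[OF ne bdd] unfolding \<sigma>_def by blast
  then have "null_at y (slab u a b)"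
    unfolding \<Sigma>_def by (auto elim: null_at_subset simp: slab_def)
  then show False using not_null by simp
qed

lemma support_value_exists:
  assumes "y \<in> topspace Y" "continuous_map X euclideanreal u" "f \<in> cfun X" "T f y \<noteq> 0"
  shows "\<exists>t. support_value y u t"
  using bounded_slab_not_null[OF assms] support_value_in_slab[OF assms(2)] by blast

lemma not_null_at_box:
  assumes "finite J" and not_null: "\<not> null_at y (topspace X)"
    and \<pi>: "\<And>i. i \<in> J \<Longrightarrow> continuous_map X euclideanreal (\<pi> i)"
    and t: "\<And>i. i \<in> J \<Longrightarrow> support_value y (\<pi> i) (t i)"
    and "\<delta> > 0"
  shows "\<not> null_at y {x \<in> topspace X. \<forall>i\<in>J. \<bar>\<pi> i x - t i\<bar> < \<delta>}"
  using assms(1) \<pi> t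
proof (induction J rule: finite_induct)
  case empty
  then show ?case using not_null by simp
next
  case (insert i J)
  define l where "l = (\<lambda>x. min 1 (max 0 (2 - 2 * \<bar>\<pi> i x - t i\<bar> / \<delta>)))"
  have "\<not> null_at y ({x \<in> topspace X. \<forall>j\<in>J. \<bar>\<pi> j x - t j\<bar> < \<delta>} \<inter> {x. \<bar>\<pi> i x - t i\<bar> < \<delta>})"
  proof (rule not_null_at_Int_cutoff)
    show "continuous_map X euclideanreal l"
      unfolding l_def using \<open>\<delta> > 0\<close> by (intro continuous_intros insert.prems(1)[OF insertI1]) auto
    show "\<not> null_at y {x \<in> topspace X. \<forall>j\<in>J. \<bar>\<pi> j x - t j\<bar> < \<delta>}"
      using insert by simp
    have "\<delta> / 2 > 0" using \<open>\<delta> > 0\<close> by simp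
    then show "\<not> null_at y {x \<in> topspace X. \<bar>\<pi> i x - t i\<bar> < \<delta> / 2}"
      using insert.prems(2)[OF insertI1] unfolding support_value_def by blast
    show "l x = 1" if "x \<in> {x \<in> topspace X. \<bar>\<pi> i x - t i\<bar> < \<delta> / 2}" for x
      using that \<open>\<delta> > 0\<close> unfolding l_def by (auto simp: divide_less_eq)
    show "x \<in> {x. \<bar>\<pi> i x - t i\<bar> < \<delta>}" if "l x \<noteq> 0" for x
    proof (rule ccontr)
      assume "x \<notin> {x. \<bar>\<pi> i x - t i\<bar> < \<delta>}"
      then have "2 \<le> 2 * \<bar>\<pi> i x - t i\<bar> / \<delta>" using \<open>\<delta> > 0\<close> by (simp add: le_divide_eq)
      then show False using that unfolding l_def by simp
    qed
  qed
  moreover have "{x \<in> topspace X. \<forall>j\<in>J. \<bar>\<pi> j x - t j\<bar> < \<delta>} \<inter> {x. \<bar>\<pi> i x - t i\<bar> < \<delta>} =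
      {x \<in> topspace X. \<forall>j\<in>insert i J. \<bar>\<pi> j x - t j\<bar> < \<delta>}"
    by auto
  ultimately show ?case by simp
qed

lemma not_null_at_basic_box_nbhd:
  assumes not_null: "\<not> null_at y (topspace X)"
    and \<phi>: "\<And>i. i \<in> I \<Longrightarrow> continuous_map X euclideanreal (\<lambda>x. \<phi> x i)"
    and p: "\<And>i. i \<in> I \<Longrightarrow> support_value y (\<lambda>x. \<phi> x i) (p i)"
    and \<phi>_ext: "\<And>x. x \<in> topspace X \<Longrightarrow> \<phi> x \<in> extensional I"
    and U: "basic_box_nbhd I U p"
  shows "\<not> null_at y {x \<in> topspace X. \<phi> x \<in> PiE I U}"
proof -
  define J where "J = {i \<in> I. U i \<noteq> UNIV}"
  have J: "finite J" "J \<subseteq> I" using U unfolding J_def basic_box_nbhd_def by auto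
  have "\<exists>d>0. ball (p i) d \<subseteq> U i" if "i \<in> J" for i
  proof -
    have "open (U i)" "p i \<in> U i"
      using U that J(2) unfolding basic_box_nbhd_def by (auto simp: PiE_iff)
    then show ?thesis using open_contains_ball by blast
  qed
  then obtain d where d: "\<And>i. i \<in> J \<Longrightarrow> d i > 0" "\<And>i. i \<in> J \<Longrightarrow> ball (p i) (d i) \<subseteq> U i"
    by metis
  define \<delta> where "\<delta> = Min (insert 1 (d ` J))"
  have \<delta>: "\<delta> > 0" "\<And>i. i \<in> J \<Longrightarrow> \<delta> \<le> d i"
    unfolding \<delta>_def using J(1) d(1) by (auto simp: Min_gr_iff)
  have "\<not> null_at y {x \<in> topspace X. \<forall>i\<in>J. \<bar>\<phi> x i - p i\<bar> < \<delta>}"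
    using J \<phi> p by (intro not_null_at_box[OF J(1) not_null _ _ \<delta>(1)]) auto
  moreover have "\<phi> x \<in> PiE I U" if "x \<in> topspace X" and close: "\<forall>i\<in>J. \<bar>\<phi> x i - p i\<bar> < \<delta>" for x
  proof -
    have "\<phi> x i \<in> U i" if "i \<in> J" for i
    proof -
      have "\<bar>\<phi> x i - p i\<bar> < d i" using close \<delta>(2)[OF that] that by fastforce
      then have "\<phi> x i \<in> ball (p i) (d i)" by (simp add: dist_real_def abs_minus_commute)
      then show ?thesis using d(2)[OF that] by blast
    qed
    then show ?thesis using \<phi>_ext[OF that(1)] unfolding J_def by (auto simp: PiE_iff)
  qed
  then have "{x \<in> topspace X. \<forall>i\<in>J. \<bar>\<phi> x i - p i\<bar> < \<delta>} \<subseteq> {x \<in> topspace X. \<phi> x \<in> PiE I U}"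
    by blast
  ultimately show ?thesis using null_at_subset by blast
qed

definition support_point :: "'b \<Rightarrow> 'a \<Rightarrow> bool" where
  "support_point y x0 \<longleftrightarrow> x0 \<in> topspace X \<and> (\<forall>V. openin X V \<longrightarrow> x0 \<in> V \<longrightarrow> \<not> null_at y V)"

text \<open>Embed \<open>X\<close> as a closed subspace of a power of the real line; the support values of the
  coordinates form a point all of whose basic neighbourhoods pull back to non-null sets.\<close>
lemma support_point_exists:
  assumes y: "y \<in> topspace Y" and f: "f \<in> cfun X" and nz: "T f y \<noteq> 0"
  shows "\<exists>x0. support_point y x0"
proof -
  obtain I :: "('a \<Rightarrow> real) set" and S \<phi> \<psi>
    where S: "closedin (powertop_real I) S"
      and hm: "homeomorphic_maps X (subtopology (powertop_real I) S) \<phi> \<psi>"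
    using realcompact_X unfolding realcompact_space_def homeomorphic_space_def by blast
  have \<phi>: "continuous_map X (powertop_real I) \<phi>"
    using hm unfolding homeomorphic_maps_def continuous_map_in_subtopology by blast
  have \<phi>_ext: "\<phi> x \<in> extensional I" if "x \<in> topspace X" for x
    using \<phi> that by (auto simp: continuous_map_def PiE_def)
  have coord: "continuous_map X euclideanreal (\<lambda>x. \<phi> x i)" if "i \<in> I" for i
    using continuous_map_compose[OF \<phi> continuous_map_product_projection[OF that]] by (simp add: o_def)
  have not_null: "\<not> null_at y (topspace X)"
    using null_atD[OF _ f] nz cfun_nonzero_in_topspace[OF f] by blast
  have "\<forall>i\<in>I. \<exists>t. support_value y (\<lambda>x. \<phi> x i) t"
    using support_value_exists[OF y coord f nz] by blast
  then obtain t where t: "\<And>i. i \<in> I \<Longrightarrow> support_value y (\<lambda>x. \<phi> x i) (t i)"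
    using bchoice by metis
  define p where "p = restrict t I"
  have box: "\<not> null_at y {x \<in> topspace X. \<phi> x \<in> PiE I U}" if "basic_box_nbhd I U p" for U
    using t that unfolding p_def
    by (intro not_null_at_basic_box_nbhd[OF not_null coord _ \<phi>_ext]) auto
  have "p \<in> topspace (powertop_real I)" unfolding p_def by simp
  moreover have "\<exists>x\<in>topspace X. \<phi> x \<in> PiE I U" if "basic_box_nbhd I U p" for U
  proof -
    have "{x \<in> topspace X. \<phi> x \<in> PiE I U} \<noteq> {}" using box[OF that] null_at_empty by force
    then show ?thesis by blast
  qed
  ultimately obtain x0 where x0: "x0 \<in> topspace X" and
    nbhds: "\<And>V. openin X V \<Longrightarrow> x0 \<in> V \<Longrightarrow>
      \<exists>U. basic_box_nbhd I U p \<and> {x \<in> topspace X. \<phi> x \<in> PiE I U} \<subseteq> V"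
    using closed_embedding_powertop_real_basic_nbhds[OF hm S] by blast
  have "\<not> null_at y V" if V: "openin X V" "x0 \<in> V" for V
  proof
    assume "null_at y V"
    obtain U where "basic_box_nbhd I U p" "{x \<in> topspace X. \<phi> x \<in> PiE I U} \<subseteq> V"
      using nbhds[OF V] by blast
    then show False using box null_at_subset[OF \<open>null_at y V\<close>] by blast
  qed
  then show ?thesis using x0 unfolding support_point_def by blast
qed

end

lemma continuous_map_compact_open_topology_empty:
  fixes g :: "('b \<Rightarrow> 'f::real_normed_vector) \<Rightarrow> ('a \<Rightarrow> 'e::real_normed_vector)"
  assumes "topspace Y = {}" and "g (\<lambda>y. 0) \<in> cfun X"
  shows "continuous_map (compact_open_topology Y) (compact_open_topology X) g"
proof (rule continuous_map_eq)
  show "continuous_map (compact_open_topology Y) (compact_open_topology X) (\<lambda>h. g (\<lambda>y. 0))"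
    using assms(2) by (simp add: topspace_compact_open_topology)
  show "g (\<lambda>y. 0) = g h" if "h \<in> topspace (compact_open_topology Y)" for h
    using that assms(1) by (simp add: topspace_compact_open_topology cfun_empty_space)
qed

context linear_biseparating
begin

text \<open>Modulate \<open>f\<close> by \<open>u = 1 / sqrt (norm f)\<close>: a compactly supported profile \<open>\<beta>\<close> then lives
  where \<open>norm f\<close> is bounded below, which is disjoint from a small neighbourhood of \<open>x0\<close>
  carrying a witness of non-nullity.\<close>
lemma T_vanishes_at_support_point:
  assumes y: "y \<in> topspace Y" and x0: "support_point y x0"
    and f: "f \<in> cfun X" and "f x0 = 0"
  shows "T f y = 0"
proof (rule T_vanishes_if_modulation_admissible[OF _ y f])
  define u where "u = (\<lambda>x. inverse (sqrt (norm (f x))))"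
  have "T (modulation u f \<beta>) y = 0"
    if \<beta>: "linear_growth \<beta>" and vanish: "\<forall>t. n \<le> \<bar>t\<bar> \<longrightarrow> \<beta> t = 0" for \<beta> n
  proof -
    define r where "r = max n 1"
    define V where "V = {x \<in> topspace X. norm (f x) \<in> {..<1 / r\<^sup>2}}"
    have "openin X V"
      unfolding V_def by (rule openin_continuous_map_preimage[OF continuous_map_norm[OF cfunD(1)[OF f]]]) auto
    moreover have "x0 \<in> V" using x0 \<open>f x0 = 0\<close> unfolding V_def support_point_def r_def by simp
    ultimately have "\<not> null_at y V" using x0 unfolding support_point_def by blast
    then obtain h where h: "h \<in> cfun X" "\<And>x. h x \<noteq> 0 \<Longrightarrow> x \<in> V" "T h y \<noteq> 0"
      by (rule not_null_atE) blast
    have "x \<notin> V" if "modulation u f \<beta> x \<noteq> 0" for x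
    proof -
      have "\<beta> (u x) \<noteq> 0" and fx: "norm (f x) > 0" using that by (auto simp: modulation_nonzero)
      then have "inverse (sqrt (norm (f x))) < r"
        using vanish unfolding u_def r_def by (auto simp: not_le[symmetric])
      then have "1 < r * sqrt (norm (f x))" using fx by (simp add: field_simps)
      then have "1 < (r * sqrt (norm (f x)))\<^sup>2" by (simp add: one_less_power)
      then have "1 / r\<^sup>2 < norm (f x)" using fx by (simp add: power_mult_distrib field_simps r_def)
      then show ?thesis unfolding V_def by simp
    qed
    then have "T (modulation u f \<beta>) y = 0 \<or> T h y = 0"
      using h(2) by (intro T_disjoint modulation_inverse_sqrt_in_cfun[OF f \<beta>, folded u_def] h(1)) blast
    then show ?thesis using h(3) by simp
  qed
  then show "modulation_admissible y u f"
    unfolding modulation_admissible_def u_def using modulation_inverse_sqrt_in_cfun[OF f] by blast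
qed

definition supp :: "'b \<Rightarrow> 'a" where
  "supp y = (SOME x0. support_point y x0)"

definition J :: "'b \<Rightarrow> 'e \<Rightarrow> 'f" where
  "J y v = T (const_fun X v) y"

lemma support_point_supp:
  assumes "y \<in> topspace Y" and "(w::'f) \<noteq> 0"
  shows "support_point y (supp y)"
proof -
  have c: "const_fun Y w \<in> cfun Y" by (rule cfun_const_fun)
  have "T (Tinv (const_fun Y w)) y \<noteq> 0"
    using T_Tinv[OF c] assms by (simp add: const_fun_def)
  then have "\<exists>x0. support_point y x0"
    using support_point_exists[OF assms(1) Tinv_in_cfun[OF c]] by blast
  then show ?thesis unfolding supp_def by (rule someI_ex)
qed

lemma T_eq_J_supp:
  assumes y: "y \<in> topspace Y" and f: "f \<in> cfun X"
  shows "T f y = J y (f (supp y))"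
proof (cases "\<exists>w::'f. w \<noteq> 0")
  case True
  then have supp: "support_point y (supp y)" using support_point_supp[OF y] by blast
  have c: "const_fun X (f (supp y)) \<in> cfun X" by (rule cfun_const_fun)
  have "T (\<lambda>x. f x - const_fun X (f (supp y)) x) y = 0"
    using supp by (intro T_vanishes_at_support_point[OF y supp cfun_diff[OF f c]])
      (simp add: const_fun_def support_point_def)
  then show ?thesis unfolding J_def using T_diff[OF f c] by simp
qed (metis)

lemma linear_J: "linear (J y)"
proof (rule linearI)
  show "J y (v1 + v2) = J y v1 + J y v2" for v1 v2
  proof -
    have "const_fun X (v1 + v2) = (\<lambda>x. const_fun X v1 x + const_fun X v2 x)"
      by (auto simp: const_fun_def)
    then show ?thesis unfolding J_def by (simp only: T_add[OF cfun_const_fun cfun_const_fun])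
  qed
  show "J y (c *\<^sub>R v) = c *\<^sub>R J y v" for c v
  proof -
    have "const_fun X (c *\<^sub>R v) = (\<lambda>x. c *\<^sub>R const_fun X v x)" by (auto simp: const_fun_def)
    then show ?thesis unfolding J_def by (simp only: T_scaleR[OF cfun_const_fun])
  qed
qed

text \<open>\<open>supp y \<in> U\<close> on the open set where \<open>T f\<close> does not vanish, for any \<open>f\<close> supported in \<open>U\<close>.\<close>
lemma continuous_map_supp:
  assumes "(w::'f) \<noteq> 0"
  shows "continuous_map Y X supp"
  unfolding continuous_map_def
proof (intro conjI allI impI)
  show "supp \<in> topspace Y \<rightarrow> topspace X"
    using support_point_supp[OF _ assms] by (auto simp: support_point_def)
  fix U assume U: "openin X U"
  show "openin Y {y \<in> topspace Y. supp y \<in> U}"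
  proof (subst openin_subopen, intro ballI)
    fix y0 assume y0: "y0 \<in> {y \<in> topspace Y. supp y \<in> U}"
    then have "\<not> null_at y0 U"
      using support_point_supp[OF _ assms] U unfolding support_point_def by blast
    then obtain f where f: "f \<in> cfun X" "\<And>x. f x \<noteq> 0 \<Longrightarrow> x \<in> U" "T f y0 \<noteq> 0"
      by (rule not_null_atE) blast
    define V where "V = {y \<in> topspace Y. T f y \<in> -{0}}"
    have "openin Y V"
      unfolding V_def by (rule openin_continuous_map_preimage[OF cfunD(1)[OF T_in_cfun[OF f(1)]]]) auto
    moreover have "y0 \<in> V" using y0 f(3) unfolding V_def by auto
    moreover have "supp y \<in> U" if "y \<in> V" for y
      using that f(2) T_eq_J_supp[OF _ f(1), of y] T_vanishes_at_support_point[OF _ _ f(1), of y]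
        support_point_supp[OF _ assms, of y] unfolding V_def by auto
    ultimately show "\<exists>V. openin Y V \<and> y0 \<in> V \<and> V \<subseteq> {y \<in> topspace Y. supp y \<in> U}"
      unfolding V_def by blast
  qed
qed

lemma T_bounded_on_compact:
  assumes L: "compactin Y L"
  shows "\<exists>K C. compactin X K \<and> C \<ge> 0 \<and>
     (\<forall>f\<in>cfun X. \<forall>r. (\<forall>x\<in>K. norm (f x) \<le> r) \<longrightarrow> (\<forall>y\<in>L. norm (T f y) \<le> C * r))"
proof (cases "\<exists>w::'f. w \<noteq> 0")
  case False
  then show ?thesis by (intro exI[of _ "{}"] exI[of _ 0]) auto
next
  case True
  then obtain w :: 'f where w: "w \<noteq> 0" by blast
  obtain B :: "'e set" and M where B: "finite B"
    and rep: "\<And>v. (\<Sum>b\<in>B. representation B v b *\<^sub>R b) = v"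
    and M: "\<And>v b. b \<in> B \<Longrightarrow> \<bar>representation B v b\<bar> \<le> M * norm v"
    using finite_dimensional_coefficients_bounded[OF finite_dimensional_E] by blast
  define g where "g = (\<lambda>y. \<Sum>b\<in>B. norm (J y b))"
  have "continuous_map Y euclideanreal g"
    unfolding g_def J_def
    by (intro continuous_map_sum B continuous_map_norm cfunD(1)[OF T_in_cfun[OF cfun_const_fun]])
  then have "compact (g ` L)" using image_compactin[OF L] by fastforce
  then obtain A where A: "\<And>y. y \<in> L \<Longrightarrow> g y \<le> A"
    using compact_imp_bounded[of "g ` L"] unfolding bounded_iff by (metis image_eqI real_norm_def abs_le_iff)
  have "norm (T f y) \<le> (\<bar>M\<bar> * \<bar>A\<bar>) * r"
    if f: "f \<in> cfun X" and fr: "\<forall>x\<in>supp ` L. norm (f x) \<le> r" and yL: "y \<in> L" for f r y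
  proof -
    have yY: "y \<in> topspace Y" using L yL compactin_subset_topspace by blast
    let ?v = "f (supp y)"
    have vr: "norm ?v \<le> r" using fr yL by blast
    then have r: "r \<ge> 0" using norm_ge_zero order_trans by blast
    have coeff: "\<bar>representation B ?v b\<bar> \<le> \<bar>M\<bar> * r" if "b \<in> B" for b
      using M[OF that, of ?v] vr by (smt (verit) abs_ge_self mult_mono norm_ge_zero)
    have "T f y = J y (\<Sum>b\<in>B. representation B ?v b *\<^sub>R b)"
      using T_eq_J_supp[OF yY f] rep by simp
    also have "\<dots> = (\<Sum>b\<in>B. representation B ?v b *\<^sub>R J y b)"
      by (simp add: linear_sum[OF linear_J] linear_scale[OF linear_J])
    also have "norm \<dots> \<le> (\<Sum>b\<in>B. (\<bar>M\<bar> * r) * norm (J y b))"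
      using coeff by (intro order_trans[OF norm_sum] sum_mono) (simp add: mult_right_mono)
    also have "\<dots> = (\<bar>M\<bar> * r) * g y" unfolding g_def by (simp add: sum_distrib_left)
    also have "\<dots> \<le> (\<bar>M\<bar> * r) * \<bar>A\<bar>" using A[OF yL] r by (intro mult_left_mono) auto
    finally show ?thesis by (simp add: mult_ac)
  qed
  moreover have "compactin X (supp ` L)" by (rule image_compactin[OF L continuous_map_supp[OF w]])
  ultimately show ?thesis by (intro exI[of _ "supp ` L"] exI[of _ "\<bar>M\<bar> * \<bar>A\<bar>"]) auto
qed

lemma compact_open_nbhd_T_maps_into:
  assumes L: "compactin Y L" and V: "open V" and f1: "f1 \<in> cfun X" "T f1 ` L \<subseteq> V"
  shows "\<exists>N. openin (compact_open_topology X) N \<and> f1 \<in> N \<and> N \<subseteq> {f \<in> cfun X. T f ` L \<subseteq> V}"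
proof -
  obtain K C where K: "compactin X K" and C: "C \<ge> 0"
    and KC: "\<And>f r. f \<in> cfun X \<Longrightarrow> (\<forall>x\<in>K. norm (f x) \<le> r) \<Longrightarrow> (\<forall>y\<in>L. norm (T f y) \<le> C * r)"
    using T_bounded_on_compact[OF L] by blast
  have "compact (T f1 ` L)" using image_compactin[OF L cfunD(1)[OF T_in_cfun[OF f1(1)]]] by simp
  then obtain \<epsilon> where \<epsilon>: "\<epsilon> > 0" "\<And>z. z \<in> T f1 ` L \<Longrightarrow> ball z \<epsilon> \<subseteq> V"
    using Heine_Borel_lemma[of "T f1 ` L" "{V}"] f1(2) V by auto
  define \<delta> where "\<delta> = \<epsilon> / (2 * (C + 1))"
  have "\<delta> > 0" unfolding \<delta>_def using \<epsilon>(1) C by (intro divide_pos_pos) auto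
  moreover have "C * \<delta> = \<epsilon> * (C / (2 * (C + 1)))" unfolding \<delta>_def by simp
  moreover have "\<epsilon> * (C / (2 * (C + 1))) < \<epsilon> * 1"
    using \<epsilon>(1) C by (intro mult_strict_left_mono) (auto simp: field_simps)
  ultimately have \<delta>: "\<delta> > 0" "C * \<delta> < \<epsilon>" by simp_all
  obtain N where N: "openin (compact_open_topology X) N" "f1 \<in> N"
    "\<And>f x. f \<in> N \<Longrightarrow> x \<in> K \<Longrightarrow> norm (f x - f1 x) \<le> \<delta>"
    using compact_open_topology_uniform_nbhd[OF f1(1) K \<delta>(1)] by blast
  have "T f y \<in> V" if f: "f \<in> N" and y: "y \<in> L" for f y
  proof -
    have fX: "f \<in> cfun X"
      using openin_subset[OF N(1)] f by (auto simp: topspace_compact_open_topology)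
    have "norm (T f y - T f1 y) \<le> C * \<delta>"
      using KC[OF cfun_diff[OF fX f1(1)]] N(3)[OF f] y T_diff[OF fX f1(1)] by simp
    then show ?thesis using \<epsilon>(2)[of "T f1 y"] \<delta>(2) y by (auto simp: dist_norm norm_minus_commute)
  qed
  then show ?thesis
    using N openin_subset[OF N(1)] by (auto simp: topspace_compact_open_topology)
qed

lemma continuous_map_compact_open_topology_T:
  "continuous_map (compact_open_topology X) (compact_open_topology Y) T"
  unfolding compact_open_topology_def[of Y]
proof (rule continuous_on_generated_topo)
  show "T ` topspace (compact_open_topology X) \<subseteq>
      \<Union>{{f \<in> cfun Y. f ` K \<subseteq> U} | K U. compactin Y K \<and> open U}"
    using T_in_cfun topspace_compact_open_topology[of Y]
    unfolding topspace_compact_open_topology compact_open_topology_def by auto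
next
  fix U assume "U \<in> {{g \<in> cfun Y. g ` L \<subseteq> V} | L V. compactin Y L \<and> open (V :: 'f set)}"
  then obtain L V where U: "U = {g \<in> cfun Y. g ` L \<subseteq> V}" and L: "compactin Y L" and V: "open V"
    by blast
  have "T -` U \<inter> topspace (compact_open_topology X) = {f \<in> cfun X. T f ` L \<subseteq> V}"
    unfolding U topspace_compact_open_topology using T_in_cfun by auto
  then show "openin (compact_open_topology X) (T -` U \<inter> topspace (compact_open_topology X))"
    using compact_open_nbhd_T_maps_into[OF L V] by (subst openin_subopen) auto
qed

lemma finite_dimensional_F:
  assumes "topspace Y \<noteq> {}"
  shows "\<exists>B::'f set. finite B \<and> span B = UNIV"
proof -
  obtain y0 where y0: "y0 \<in> topspace Y" using assms by blast
  obtain B :: "'e set" where B: "finite B" "span B = UNIV"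
    using finite_dimensional_E by blast
  have "w \<in> span (J y0 ` B)" for w :: 'f
  proof -
    have c: "const_fun Y w \<in> cfun Y" by (rule cfun_const_fun)
    have "w = J y0 (Tinv (const_fun Y w) (supp y0))"
      using T_Tinv[OF c] T_eq_J_supp[OF y0 Tinv_in_cfun[OF c]] y0 by (simp add: const_fun_def)
    moreover have "J y0 ` span B = span (J y0 ` B)" by (rule span_linear_image[OF linear_J, symmetric])
    ultimately show ?thesis using B(2) by blast
  qed
  then show ?thesis using B(1) by blast
qed

end

theorem corollary2p7:
  fixes X :: "'a topology" and Y :: "'b topology"
    and T :: "('a \<Rightarrow> 'e::real_normed_vector) \<Rightarrow> ('b \<Rightarrow> 'f::real_normed_vector)"
  assumes "completely_regular_space X" and "realcompact_space X"
    and "completely_regular_space Y" and "realcompact_space Y"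
    and "\<exists>B::'e set. finite B \<and> span B = UNIV"
    and "linear_on_cfun X T"
    and "biseparating X Y T"
  shows "continuous_map (compact_open_topology X) (compact_open_topology Y) T \<and>
         continuous_map (compact_open_topology Y) (compact_open_topology X) (inv_into (cfun X) T)"
proof -
  interpret linear_biseparating X Y T
    by unfold_locales (use assms in auto)
  have "continuous_map (compact_open_topology Y) (compact_open_topology X) Tinv"
  proof (cases "topspace Y = {}")
    case True
    then show ?thesis
      using Tinv_in_cfun[OF cfun_zero] by (rule continuous_map_compact_open_topology_empty)
  next
    case False
    interpret inverse: linear_biseparating Y X Tinv
      by unfold_locales
        (use assms finite_dimensional_F[OF False] linear_on_cfun_inv_into[OF linear_T bij_T]
          biseparating_inv_into[OF biseparating_T] in auto)
    show ?thesis by (rule inverse.continuous_map_compact_open_topology_T)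
  qed
  then show ?thesis using continuous_map_compact_open_topology_T by blast
qed

end
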